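(* Let $M_k$ be either $M_{E,k}$ for all $k$ (then set $C_\dagger=C_{E,\dagger}$, $\eta=\eta_E$) or $M_{V,k}$ for all $k$ (then set $C_\dagger=C_{V,\dagger}$, $\eta=\eta_V$), and let $R_k=Id_k-M_k^{-1}A_k$. Then for all $k\ge1$ and all $\mathbf{v}\in N_k$, $$a\big((Id_k-I_{k-1}^kP_k^{k-1})\mathbf{v},(Id_k-I_{k-1}^kP_k^{k-1})\mathbf{v}\big)\le\frac{C_\dagger}{\eta}\,a\big((Id_k-R_k)\mathbf{v},\mathbf{v}\big).$$
   Context: Setting: $\Omega\subset\mathbb{R}^3$ bounded convex hexahedral domain with axis-parallel edges, $\alpha>0$ constant, $a(\mathbf{w},\mathbf{v})=\alpha\int_\Omega\nabla\times\mathbf{w}\cdot\nabla\times\mathbf{v}+\int_\Omega\mathbf{w}\cdot\mathbf{v}$. Meshes $\mathcal{T}_k$ of axis-parallel boxes, $\mathcal{T}_k$ the uniform refinement of $\mathcal{T}_{k-1}$; $N_k\subset H_0(\mathbf{curl};\Omega)$ the lowest order Nédélec space on $\mathcal{T}_k$ (piecewise $(a_1+a_2x_2+a_3x_3+a_4x_2x_3,\,b_1+b_2x_3+b_3x_1+b_4x_3x_1,\,c_1+c_2x_1+c_3x_2+c_4x_1x_2)$, degrees of freedom $\lambda_e(\mathbf{v})=\frac1{|e|}\int_e\mathbf{v}\cdot\mathbf{t}_e$ on interior edges); $A_k:N_k\to N_k'$, $\langle A_k\mathbf{w},\mathbf{v}\rangle=a(\mathbf{w},\mathbf{v})$; $Id_k$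 identity on $N_k$; $I_{k-1}^k:N_{k-1}\to N_k$ natural injection; $P_k^{k-1}:N_k\to N_{k-1}$ the Ritz projection $a(P_k^{k-1}\mathbf{w},\mathbf{v})=a(\mathbf{w},I_{k-1}^k\mathbf{v})$. With $\mathcal{T}_h=\mathcal{T}_k$, $\mathcal{T}_H=\mathcal{T}_{k-1}$, $N_h=N_k$: interior spaces $N_h^T=\{\mathbf{v}\in N_h:\mathbf{v}=0\text{ on }\Omega\setminus T\}$ for $T\in\mathcal{T}_H$; for an interior coarse edge $E$, $N_h^E$ is the set of $\mathbf{v}\in N_h$ whose degrees of freedom vanish on all interior fine edges except those lying in the interior of one of the four coarse elements $T_E^i$ containing $E$, those contained in one of the four coarse faces $F_E^j$ containing $E$ but not in $\partial F_E^j$, and those contained in $E$, and which are $a$-orthogonal to $\sum_iN_h^{T_E^i}$; for an interior coarse vertex $V$, $N_h^V$ is defined likewise using the $8$ coarse elements, $12$ coarse faces and $6$ coarse edges containing $V$ (all fine edges contained in these coarse edges allowed), with $a$-orthogonality to the sum of the $8$ interior spaces. For each subspace $S$, $J_S$ is the inclusion, $J_S^t$ its transpose, $A_S$ given by $a$ on $S$. $M_{E,k}^{-1}=\eta_E\big(\sum_{T\in\mathcal{T}_H}J_TA_T^{-1}J_T^t+\sum_{E\in\mathcal{E}_H}J_EA_E^{-1}J_E^t\big)$ with $0<\eta_E\le1/12$, $M_{V,k}^{-1}=\eta_V\big(\sum_TJ_TA_T^{-1}J_T^t+\sum_{V\in\mathcal{V}_H}J_VA_V^{-1}J_V^t\big)$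 with $0<\eta_V\le1/8$ ($\mathcal{E}_H,\mathcal{V}_H$ interior coarse edges/vertices); $M_{E,k},M_{V,k}$ are their inverses. With $P_H:N_h\to N_H$ the $a$-orthogonal projection, $C_{E,\dagger}$ (resp. $C_{V,\dagger}$) is a constant, independent of $\alpha$, $h$ and the number of elements, such that on every level each $\mathbf{w}\in(I-P_H)N_h$ can be written as $\sum_{T}\mathbf{w}_T+\sum_{E\in\mathcal{E}_H}\mathbf{w}_E$ with $\mathbf{w}_T\in N_h^T$, $\mathbf{w}_E\in N_h^E$ and $\sum_Ta(\mathbf{w}_T,\mathbf{w}_T)+\sum_Ea(\mathbf{w}_E,\mathbf{w}_E)\le C_{E,\dagger}a(\mathbf{w},\mathbf{w})$ (resp. with vertex spaces and $C_{V,\dagger}$); such constants exist. *)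

theory Defs
  imports "HOL-Analysis.Analysis"
begin

text \<open>Points of R^3 have type real^3. An axis-parallel box (and, more generally,
  a face of such a box) is represented by the pair (c,d) of its lower and upper corners.\<close>

type_synonym pt = "real^3"
type_synonym bx = "pt \<times> pt"

definition cbx :: "bx \<Rightarrow> pt set" where "cbx T = cbox (fst T) (snd T)"
definition obx :: "bx \<Rightarrow> pt set" where "obx T = box (fst T) (snd T)"

definition nondeg :: "bx \<Rightarrow> bool" where
  "nondeg T \<longleftrightarrow> (\<forall>i. fst T $ i < snd T $ i)"

definition is_face :: "bx \<Rightarrow> bx \<Rightarrow> bool" where
  "is_face T F \<longleftrightarrow> (\<forall>i. (fst F $ i = fst T $ i \<and> snd F $ i = snd T $ i)
                       \<or> (fst F $ i = fst T $ i \<and> snd F $ i = fst T $ i)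
                       \<or> (fst F $ i = snd T $ i \<and> snd F $ i = snd T $ i))"

definition fdim :: "bx \<Rightarrow> nat" where "fdim F = card {i. fst F $ i < snd F $ i}"

definition faces :: "bx set \<Rightarrow> nat \<Rightarrow> bx set" where
  "faces M j = {F. \<exists>T\<in>M. is_face T F \<and> fdim F = j}"

definition box_mesh :: "pt \<Rightarrow> pt \<Rightarrow> bx set \<Rightarrow> bool" where
  "box_mesh lo hi M \<longleftrightarrow> finite M \<and> M \<noteq> {} \<and> (\<forall>T\<in>M. nondeg T) \<and>
     \<Union>(cbx ` M) = cbox lo hi \<and>
     (\<forall>T\<in>M. \<forall>T'\<in>M. T \<noteq> T' \<longrightarrow> obx T \<inter> obx T' = {}) \<and>
     (\<forall>T\<in>M. \<forall>T'\<in>M. cbx T \<inter> cbx T' = {} \<or>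
        (\<exists>F. is_face T F \<and> is_face T' F \<and> cbx T \<inter> cbx T' = cbx F))"

definition refine_box :: "bx \<Rightarrow> bx set" where
  "refine_box T = (let a = fst T; b = snd T; m = (1/2) *\<^sub>R (a + b) in
     {((\<chi> i. if s i then m $ i else a $ i), (\<chi> i. if s i then b $ i else m $ i)) | s :: 3 \<Rightarrow> bool. True})"

definition refine :: "bx set \<Rightarrow> bx set" where "refine M = \<Union>(refine_box ` M)"

definition mesh :: "bx set \<Rightarrow> nat \<Rightarrow> bx set" where "mesh T0 k = (refine ^^ k) T0"

definition int_edges :: "pt \<Rightarrow> pt \<Rightarrow> bx set \<Rightarrow> bx set" where
  "int_edges lo hi M = {E \<in> faces M 1. \<not> cbx E \<subseteq> frontier (box lo hi)}"

definition int_vertices :: "pt \<Rightarrow> pt \<Rightarrow> bx set \<Rightarrow> bx set" where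
  "int_vertices lo hi M = {V \<in> faces M 0. fst V \<in> box lo hi}"

section \<open>Lowest order Nedelec space on a box mesh\<close>

definition ned_poly :: "real^4 \<Rightarrow> real^4 \<Rightarrow> real^4 \<Rightarrow> pt \<Rightarrow> real^3" where
  "ned_poly a b c x = vector
     [a$1 + a$2 * x$2 + a$3 * x$3 + a$4 * x$2 * x$3,
      b$1 + b$2 * x$3 + b$3 * x$1 + b$4 * x$3 * x$1,
      c$1 + c$2 * x$1 + c$3 * x$2 + c$4 * x$1 * x$2]"

definition ned_polys :: "(pt \<Rightarrow> real^3) set" where
  "ned_polys = {ned_poly a b c | a b c. True}"

definition loc :: "(pt \<Rightarrow> real^3) \<Rightarrow> bx \<Rightarrow> pt \<Rightarrow> real^3" where
  "loc v T = (SOME p. p \<in> ned_polys \<and> (\<forall>x\<in>obx T. v x = p x))"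

text \<open>The lowest order Nedelec space N(M) \<subseteq> H_0(curl): piecewise Nedelec polynomials whose
  tangential traces are continuous across interior faces and vanish on boundary faces.
  Elements of H(curl) are a.e.-classes; we fix the representative which vanishes off the
  open elements (i.e. on the mesh skeleton and outside the domain).\<close>
definition ned :: "pt \<Rightarrow> pt \<Rightarrow> bx set \<Rightarrow> (pt \<Rightarrow> real^3) set" where
  "ned lo hi M = {v.
     (\<forall>T\<in>M. \<exists>p\<in>ned_polys. \<forall>x\<in>obx T. v x = p x) \<and>
     (\<forall>x. x \<notin> \<Union>(obx ` M) \<longrightarrow> v x = 0) \<and>
     (\<forall>T\<in>M. \<forall>T'\<in>M. \<forall>F i. is_face T F \<and> is_face T' F \<and> fdim F = 2 \<and> fst F $ i = snd F $ i \<longrightarrow>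
        (\<forall>x\<in>cbx F. \<forall>j. j \<noteq> i \<longrightarrow> loc v T x $ j = loc v T' x $ j)) \<and>
     (\<forall>T\<in>M. \<forall>F i. is_face T F \<and> fdim F = 2 \<and> fst F $ i = snd F $ i \<and> cbx F \<subseteq> frontier (box lo hi) \<longrightarrow>
        (\<forall>x\<in>cbx F. \<forall>j. j \<noteq> i \<longrightarrow> loc v T x $ j = 0))}"

text \<open>Degree of freedom of the edge e = [c,d]: (1/|e|) \<integral>_e v . t_e, with t_e = (d-c)/|d-c|,
  using the (tangentially continuous) trace from an element containing e.\<close>
definition dof :: "bx set \<Rightarrow> (pt \<Rightarrow> real^3) \<Rightarrow> bx \<Rightarrow> real" where
  "dof M v e = (let c = fst e; d = snd e; T = (SOME T. T \<in> M \<and> cbx e \<subseteq> cbx T) in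
     (1 / norm (d - c)) * integral {0..1} (\<lambda>s. loc v T (c + s *\<^sub>R (d - c)) \<bullet> (d - c)))"

section \<open>The bilinear form\<close>

definition pdiff :: "(pt \<Rightarrow> real^3) \<Rightarrow> 3 \<Rightarrow> 3 \<Rightarrow> pt \<Rightarrow> real" where
  "pdiff v i j x = deriv (\<lambda>t. v (x + t *\<^sub>R axis j 1) $ i) 0"

definition curl :: "(pt \<Rightarrow> real^3) \<Rightarrow> pt \<Rightarrow> real^3" where
  "curl v x = vector [pdiff v 3 2 x - pdiff v 2 3 x,
                      pdiff v 1 3 x - pdiff v 3 1 x,
                      pdiff v 2 1 x - pdiff v 1 2 x]"

definition aform :: "real \<Rightarrow> pt \<Rightarrow> pt \<Rightarrow> (pt \<Rightarrow> real^3) \<Rightarrow> (pt \<Rightarrow> real^3) \<Rightarrow> real" where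
  "aform \<alpha> lo hi w v = \<alpha> * integral (box lo hi) (\<lambda>x. curl w x \<bullet> curl v x)
                        + integral (box lo hi) (\<lambda>x. w x \<bullet> v x)"

section \<open>Level operators\<close>

text \<open>A setting: coefficient \<alpha>, domain box lo hi, initial mesh T0.\<close>
type_synonym setting = "real \<times> pt \<times> pt \<times> bx set"

definition Nk :: "setting \<Rightarrow> nat \<Rightarrow> (pt \<Rightarrow> real^3) set" where
  "Nk st k = (case st of (\<alpha>, lo, hi, T0) \<Rightarrow> ned lo hi (mesh T0 k))"

definition ak :: "setting \<Rightarrow> (pt \<Rightarrow> real^3) \<Rightarrow> (pt \<Rightarrow> real^3) \<Rightarrow> real" where
  "ak st = (case st of (\<alpha>, lo, hi, T0) \<Rightarrow> aform \<alpha> lo hi)"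

text \<open>Natural injection I_{k-1}^k (identity up to a null set: re-normalised on the fine skeleton).\<close>
definition Inj :: "setting \<Rightarrow> nat \<Rightarrow> (pt \<Rightarrow> real^3) \<Rightarrow> (pt \<Rightarrow> real^3)" where
  "Inj st k u = (case st of (\<alpha>, lo, hi, T0) \<Rightarrow>
     (\<lambda>x. if x \<in> \<Union>(obx ` mesh T0 k) then u x else 0))"

definition Ritz :: "setting \<Rightarrow> nat \<Rightarrow> (pt \<Rightarrow> real^3) \<Rightarrow> (pt \<Rightarrow> real^3)" where
  "Ritz st k w = (THE u. u \<in> Nk st (k-1) \<and> (\<forall>v\<in>Nk st (k-1). ak st u v = ak st w (Inj st k v)))"

definition Aop :: "setting \<Rightarrow> nat \<Rightarrow> (pt \<Rightarrow> real^3) \<Rightarrow> ((pt \<Rightarrow> real^3) \<Rightarrow> real)" where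
  "Aop st k w = restrict (\<lambda>v. ak st w v) (Nk st k)"

text \<open>J_S^t (restriction of a functional to S), A_S^{-1} and J_S (inclusion, implicit).\<close>
definition Jt :: "(pt \<Rightarrow> real^3) set \<Rightarrow> ((pt \<Rightarrow> real^3) \<Rightarrow> real) \<Rightarrow> ((pt \<Rightarrow> real^3) \<Rightarrow> real)" where
  "Jt S \<phi> = restrict \<phi> S"

definition AinvS :: "setting \<Rightarrow> (pt \<Rightarrow> real^3) set \<Rightarrow> ((pt \<Rightarrow> real^3) \<Rightarrow> real) \<Rightarrow> (pt \<Rightarrow> real^3)" where
  "AinvS st S \<psi> = (THE u. u \<in> S \<and> (\<forall>s\<in>S. ak st u s = \<psi> s))"

text \<open>Interior space N_h^T, T a coarse element (level k-1), h = level k.\<close>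
definition NT :: "setting \<Rightarrow> nat \<Rightarrow> bx \<Rightarrow> (pt \<Rightarrow> real^3) set" where
  "NT st k T = (case st of (\<alpha>, lo, hi, T0) \<Rightarrow>
     {v \<in> Nk st k. \<forall>x\<in>box lo hi - cbx T. v x = 0})"

definition elems_cont :: "setting \<Rightarrow> nat \<Rightarrow> pt set \<Rightarrow> bx set" where
  "elems_cont st k X = (case st of (\<alpha>, lo, hi, T0) \<Rightarrow> {T \<in> mesh T0 (k-1). X \<subseteq> cbx T})"

definition faces_cont :: "setting \<Rightarrow> nat \<Rightarrow> pt set \<Rightarrow> bx set" where
  "faces_cont st k X = (case st of (\<alpha>, lo, hi, T0) \<Rightarrow> {F \<in> faces (mesh T0 (k-1)) 2. X \<subseteq> cbx F})"

definition edges_cont :: "setting \<Rightarrow> nat \<Rightarrow> pt set \<Rightarrow> bx set" where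
  "edges_cont st k X = (case st of (\<alpha>, lo, hi, T0) \<Rightarrow> {E \<in> faces (mesh T0 (k-1)) 1. X \<subseteq> cbx E})"

text \<open>Fine interior edges whose degrees of freedom may be nonzero for a patch around the coarse
  set X (X = a coarse edge E, or a coarse vertex {V}): edges in the interior of a coarse element
  containing X, edges in a coarse face containing X but not in its boundary, edges contained in
  a coarse edge containing X.\<close>
definition allowed :: "setting \<Rightarrow> nat \<Rightarrow> pt set \<Rightarrow> bx set" where
  "allowed st k X = (case st of (\<alpha>, lo, hi, T0) \<Rightarrow>
     {e \<in> int_edges lo hi (mesh T0 k).
        (\<exists>T\<in>elems_cont st k X. open_segment (fst e) (snd e) \<subseteq> obx T) \<or>
        (\<exists>F\<in>faces_cont st k X. cbx e \<subseteq> cbx F \<and> \<not> cbx e \<subseteq> rel_frontier (cbx F)) \<or>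
        (\<exists>E\<in>edges_cont st k X. cbx e \<subseteq> cbx E)})"

definition patch_space :: "setting \<Rightarrow> nat \<Rightarrow> pt set \<Rightarrow> (pt \<Rightarrow> real^3) set" where
  "patch_space st k X = (case st of (\<alpha>, lo, hi, T0) \<Rightarrow>
     {v \<in> Nk st k.
        (\<forall>e \<in> int_edges lo hi (mesh T0 k) - allowed st k X. dof (mesh T0 k) v e = 0) \<and>
        (\<forall>w \<in> {(\<lambda>x. \<Sum>T\<in>elems_cont st k X. wT T x) | wT. \<forall>T\<in>elems_cont st k X. wT T \<in> NT st k T}.
            ak st v w = 0)})"

text \<open>Edge space N_h^E (E a coarse edge) and vertex space N_h^V (V a coarse vertex, stored as (p,p)).\<close>
definition NE :: "setting \<Rightarrow> nat \<Rightarrow> bx \<Rightarrow> (pt \<Rightarrow> real^3) set" where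
  "NE st k E = patch_space st k (cbx E)"

definition NV :: "setting \<Rightarrow> nat \<Rightarrow> bx \<Rightarrow> (pt \<Rightarrow> real^3) set" where
  "NV st k V = patch_space st k {fst V}"

datatype variant = EdgeVar | VertexVar

definition patches :: "variant \<Rightarrow> setting \<Rightarrow> nat \<Rightarrow> bx set" where
  "patches var st k = (case st of (\<alpha>, lo, hi, T0) \<Rightarrow>
     (case var of EdgeVar \<Rightarrow> int_edges lo hi (mesh T0 (k-1))
                | VertexVar \<Rightarrow> int_vertices lo hi (mesh T0 (k-1))))"

definition NP :: "variant \<Rightarrow> setting \<Rightarrow> nat \<Rightarrow> bx \<Rightarrow> (pt \<Rightarrow> real^3) set" where
  "NP var st k P = (case var of EdgeVar \<Rightarrow> NE st k P | VertexVar \<Rightarrow> NV st k P)"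

definition eta_max :: "variant \<Rightarrow> real" where
  "eta_max var = (case var of EdgeVar \<Rightarrow> 1/12 | VertexVar \<Rightarrow> 1/8)"

definition Minv :: "variant \<Rightarrow> real \<Rightarrow> setting \<Rightarrow> nat \<Rightarrow> ((pt \<Rightarrow> real^3) \<Rightarrow> real) \<Rightarrow> (pt \<Rightarrow> real^3)" where
  "Minv var \<eta> st k \<phi> = (case st of (\<alpha>, lo, hi, T0) \<Rightarrow>
     (\<lambda>x. \<eta> *\<^sub>R ((\<Sum>T\<in>mesh T0 (k-1). AinvS st (NT st k T) (Jt (NT st k T) \<phi>) x)
                + (\<Sum>P\<in>patches var st k. AinvS st (NP var st k P) (Jt (NP var st k P) \<phi>) x))))"

definition Rk :: "variant \<Rightarrow> real \<Rightarrow> setting \<Rightarrow> nat \<Rightarrow> (pt \<Rightarrow> real^3) \<Rightarrow> (pt \<Rightarrow> real^3)" where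
  "Rk var \<eta> st k v = (\<lambda>x. v x - Minv var \<eta> st k (Aop st k v) x)"

definition stable_decomp :: "variant \<Rightarrow> setting \<Rightarrow> real \<Rightarrow> bool" where
  "stable_decomp var st C \<longleftrightarrow> (case st of (\<alpha>, lo, hi, T0) \<Rightarrow>
     (\<forall>k\<ge>1. \<forall>w \<in> {(\<lambda>x. v x - Inj st k (Ritz st k v) x) | v. v \<in> Nk st k}.
        \<exists>wT wP. (\<forall>T\<in>mesh T0 (k-1). wT T \<in> NT st k T) \<and>
                (\<forall>P\<in>patches var st k. wP P \<in> NP var st k P) \<and>
                w = (\<lambda>x. (\<Sum>T\<in>mesh T0 (k-1). wT T x) + (\<Sum>P\<in>patches var st k. wP P x)) \<and>
                (\<Sum>T\<in>mesh T0 (k-1). ak st (wT T) (wT T)) + (\<Sum>P\<in>patches var st k. ak st (wP P) (wP P))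
                  \<le> C * ak st w w))"

end

(*
  Let d = (Id - I P) v. The injection is an isometry for a, so Galerkin orthogonality of the Ritz
  projection gives a(d,d) = a(d,v). Write d as the sum of the pieces w_S of the stable
  decomposition and let p_S be the local a-projections of v, so that (Id - R) v = eta * sum p_S
  and a(w_S, v) = a(w_S, p_S). Cauchy-Schwarz with a free weight t > 0 gives
    2 a(d,d) <= t * sum a(w_S,w_S) + (1/t) * sum a(p_S,v) <= t C a(d,d) + a((Id - R) v, v) / (t eta),
  and t = 1/C yields the claim. The Ritz projection and the local solves exist because a is
  positive definite on the finite-dimensional space of piecewise Nedelec fields. Finally C >= 0:
  a negative C would force every fine field to be the injection of a coarse one, which the
  piecewise gradient of a trilinear bubble refutes.
*)

theory Submission
  imports Defs "HOL-Library.Function_Algebras"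
begin

instantiation "fun" :: (type, real_vector) real_vector
begin

definition scaleR_fun :: "real \<Rightarrow> ('a \<Rightarrow> 'b) \<Rightarrow> 'a \<Rightarrow> 'b" where
  "scaleR_fun r f = (\<lambda>x. r *\<^sub>R f x)"

instance
  by standard (simp_all add: scaleR_fun_def fun_eq_iff scaleR_add_right scaleR_add_left)

end

lemma scaleR_fun_apply [simp]: "(r *\<^sub>R f) x = r *\<^sub>R f x"
  by (simp add: scaleR_fun_def)

lemma sum_fun_apply [simp]: "(\<Sum>i\<in>I. f i) x = (\<Sum>i\<in>I. f i x)"
  by (induction I rule: infinite_finite_induct) auto

section \<open>Positive definite forms on finite-dimensional spaces\<close>

lemma finite_span_basis_of_subspace:
  assumes S: "subspace S" "S \<subseteq> span F" "finite F"
  obtains B where "finite B" "B \<subseteq> S" "span B = S"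
proof -
  obtain B where B: "B \<subseteq> S" "independent B" "S \<subseteq> span B"
    by (rule basis_exists[of S])
  have "finite B"
    using independent_span_bound[OF S(3) B(2)] B(1) S(2) by auto
  moreover have "span B = S"
    using B S(1) by (simp add: span_subspace)
  ultimately show ?thesis using B(1) that by blast
qed

lemma subspace_linear_constraints:
  fixes f :: "'i \<Rightarrow> 'a::real_vector \<Rightarrow> 'b::real_vector"
  assumes V: "subspace V"
    and add: "\<And>i x y. i \<in> I \<Longrightarrow> x \<in> V \<Longrightarrow> y \<in> V \<Longrightarrow> f i (x + y) = f i x + f i y"
    and scale: "\<And>i c x. i \<in> I \<Longrightarrow> x \<in> V \<Longrightarrow> f i (c *\<^sub>R x) = c *\<^sub>R f i x"
  shows "subspace {v \<in> V. \<forall>i\<in>I. f i v = 0}" (is "subspace ?K")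
  unfolding subspace_def
proof (intro conjI ballI allI)
  show "0 \<in> ?K"
    using scale[of _ 0 0] subspace_0[OF V] by auto
  show "x + y \<in> ?K" if "x \<in> ?K" "y \<in> ?K" for x y
    using that add subspace_add[OF V] by auto
  show "c *\<^sub>R x \<in> ?K" if "x \<in> ?K" for c x
    using that scale subspace_scale[OF V] by auto
qed

lemma le_mult_of_parametric_bound:
  fixes C D X Y :: real
  assumes C: "0 \<le> C" and Y: "0 \<le> Y" and X: "X \<le> C * D"
    and bound: "\<And>t. 0 < t \<Longrightarrow> 2 * D \<le> t * X + Y / t"
  shows "D \<le> C * Y"
proof (cases "C = 0")
  case False
  with C have "0 < C" by simp
  then have "2 * D \<le> X / C + C * Y"
    using bound[of "1 / C"] by (simp add: mult.commute)
  also have "X / C \<le> D"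
    using X \<open>0 < C\<close> by (simp add: divide_le_eq mult.commute)
  finally show ?thesis by simp
next
  case True
  show ?thesis
  proof (rule ccontr)
    assume "\<not> D \<le> C * Y"
    with True have D: "0 < D" by simp
    define t where "t = (Y + 1) / D"
    have t: "0 < t" using D Y by (simp add: t_def)
    have "t * X \<le> 0"
      using t X True by (simp add: mult_nonneg_nonpos)
    moreover have "Y / t \<le> D"
      using D Y by (simp add: t_def field_simps)
    ultimately show False
      using bound[OF t] D by linarith
  qed
qed

locale pos_def_form =
  fixes V :: "'v::real_vector set" and a :: "'v \<Rightarrow> 'v \<Rightarrow> real"
  assumes subspace_V: "subspace V"
    and add_left: "u \<in> V \<Longrightarrow> w \<in> V \<Longrightarrow> z \<in> V \<Longrightarrow> a (u + w) z = a u z + a w z"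
    and scale_left: "u \<in> V \<Longrightarrow> z \<in> V \<Longrightarrow> a (c *\<^sub>R u) z = c * a u z"
    and sym: "a u w = a w u"
    and nonneg: "u \<in> V \<Longrightarrow> 0 \<le> a u u"
    and definite: "u \<in> V \<Longrightarrow> a u u = 0 \<Longrightarrow> u = 0"
begin

lemma add_right: "u \<in> V \<Longrightarrow> w \<in> V \<Longrightarrow> z \<in> V \<Longrightarrow> a z (u + w) = a z u + a z w"
  using add_left sym by metis

lemma scale_right: "u \<in> V \<Longrightarrow> z \<in> V \<Longrightarrow> a z (c *\<^sub>R u) = c * a z u"
  using scale_left sym by metis

lemma diff_left:
  assumes "u \<in> V" "w \<in> V" "z \<in> V"
  shows "a (u - w) z = a u z - a w z"
proof -
  have "a (u + (-1) *\<^sub>R w) z = a u z + a ((-1) *\<^sub>R w) z"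
    using assms subspace_scale[OF subspace_V] by (intro add_left)
  then show ?thesis
    using scale_left[OF assms(2,3), of "-1"] by simp
qed

lemma diff_right: "u \<in> V \<Longrightarrow> w \<in> V \<Longrightarrow> z \<in> V \<Longrightarrow> a z (u - w) = a z u - a z w"
  using diff_left sym by metis

lemma zero_left: "z \<in> V \<Longrightarrow> a 0 z = 0"
  using scale_left[of 0 z 0] subspace_0[OF subspace_V] by simp

lemma sum_left:
  assumes "\<And>i. i \<in> I \<Longrightarrow> f i \<in> V" "z \<in> V"
  shows "a (\<Sum>i\<in>I. f i) z = (\<Sum>i\<in>I. a (f i) z)"
  using assms
proof (induction I rule: infinite_finite_induct)
  case (insert i I)
  have "(\<Sum>i\<in>I. f i) \<in> V"
    using insert.prems(1) by (intro subspace_sum[OF subspace_V]) auto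
  then show ?case
    using insert by (simp add: add_left)
qed (simp_all add: zero_left)

lemma two_mult_le:
  assumes w: "w \<in> V" and z: "z \<in> V" and t: "0 < t"
  shows "2 * a w z \<le> t * a w w + a z z / t"
proof -
  have tw: "t *\<^sub>R w \<in> V" and d: "t *\<^sub>R w - z \<in> V"
    using w z subspace_scale[OF subspace_V] subspace_diff[OF subspace_V] by auto
  have "a (t *\<^sub>R w - z) (t *\<^sub>R w - z) = a (t *\<^sub>R w) (t *\<^sub>R w) - a (t *\<^sub>R w) z - (a z (t *\<^sub>R w) - a z z)"
    using tw z d by (simp add: diff_left diff_right)
  also have "\<dots> = t * (t * a w w) - 2 * t * a w z + a z z"
    using w z tw by (simp add: scale_left scale_right sym[of z w])
  finally have "0 \<le> t * (t * a w w) - 2 * t * a w z + a z z"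
    using nonneg[OF d] by simp
  then have "2 * a w z * t \<le> (t * a w w + a z z / t) * t"
    using t by (simp add: algebra_simps)
  then show ?thesis using t by simp
qed

lemma subspace_orthogonal:
  assumes "subspace S" "S \<subseteq> V" "W \<subseteq> V"
  shows "subspace {v \<in> S. \<forall>w\<in>W. a v w = 0}"
proof (rule subspace_linear_constraints[OF assms(1)])
  show "a (x + y) w = a x w + a y w" if "w \<in> W" "x \<in> S" "y \<in> S" for w x y
    using that assms(2,3) by (intro add_left) auto
  show "a (c *\<^sub>R x) w = c *\<^sub>R a x w" if "w \<in> W" "x \<in> S" for w c x
    using that assms(2,3) scale_left[of x w c] by auto
qed

lemma representation_extends_to_insert:
  assumes V: "span (insert b B) \<subseteq> V" and u: "u \<in> V" and z: "z \<in> span B"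
    and on_B: "\<And>y. y \<in> span B \<Longrightarrow> a u y = \<psi> y" and on_e: "a u (b - z) = \<psi> (b - z)"
    and \<psi>: "\<And>x y. x \<in> span (insert b B) \<Longrightarrow> y \<in> span (insert b B) \<Longrightarrow> \<psi> (x + y) = \<psi> x + \<psi> y"
      "\<And>c x. x \<in> span (insert b B) \<Longrightarrow> \<psi> (c *\<^sub>R x) = c * \<psi> x"
    and y: "y \<in> span (insert b B)"
  shows "a u y = \<psi> y"
proof -
  have mono: "span B \<subseteq> span (insert b B)" by (rule span_mono) blast
  have e: "b - z \<in> span (insert b B)" using z mono by (simp add: span_base span_diff subset_iff)
  obtain r where "y - r *\<^sub>R b \<in> span B"
    using y span_breakdown_eq by blast
  then have y0: "y - r *\<^sub>R (b - z) \<in> span B"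
    using z span_add span_scale by (fastforce simp: algebra_simps)
  have "a u y = a u (y - r *\<^sub>R (b - z)) + r * a u (b - z)"
    using u V y0 e mono by (metis add_right scale_right diff_add_cancel subspace_scale[OF subspace_V] subsetD)
  also have "\<dots> = \<psi> (y - r *\<^sub>R (b - z)) + \<psi> (r *\<^sub>R (b - z))"
    using y0 on_B on_e \<psi>(2) e by simp
  also have "\<dots> = \<psi> y"
    using \<psi>(1)[of "y - r *\<^sub>R (b - z)" "r *\<^sub>R (b - z)"] y0 mono e by (auto simp: span_scale)
  finally show ?thesis .
qed

text \<open>Induction on the spanning set: the new vector b is split into its component z in the old
  span and a part e = b - z that is a-orthogonal to the old span, and the old representative is
  corrected along e.\<close>

lemma riesz_span:
  assumes "finite B" "B \<subseteq> V"
    and "\<And>x y. x \<in> span B \<Longrightarrow> y \<in> span B \<Longrightarrow> \<psi> (x + y) = \<psi> x + \<psi> y"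
    and "\<And>c x. x \<in> span B \<Longrightarrow> \<psi> (c *\<^sub>R x) = c * \<psi> x"
  shows "\<exists>u\<in>span B. \<forall>y\<in>span B. a u y = \<psi> y"
  using assms
proof (induction B arbitrary: \<psi> rule: finite_induct)
  case empty
  have "\<psi> 0 = 0" using empty.prems(3)[of 0 0] by simp
  then show ?case by (simp add: zero_left subspace_0[OF subspace_V])
next
  case (insert b B)
  have span_V: "span (insert b B) \<subseteq> V"
    using insert.prems(1) subspace_V by (simp add: span_minimal)
  have mono: "span B \<subseteq> span (insert b B)" by (rule span_mono) blast
  have b: "b \<in> span (insert b B)" by (simp add: span_base)
  obtain u' where u': "u' \<in> span B" "\<forall>y\<in>span B. a u' y = \<psi> y"
    using insert.IH[of \<psi>] insert.prems mono by blast
  have bV: "b \<in> V" and BV: "span B \<subseteq> V" using b mono span_V by auto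
  then obtain z where z: "z \<in> span B" "\<forall>y\<in>span B. a z y = a b y"
    using insert.IH[of "a b"] insert.prems(1) by (auto simp: add_right scale_right subset_iff)
  define e where "e = b - z"
  have e: "e \<in> span (insert b B)" "\<forall>y\<in>span B. a e y = 0"
    using z b bV BV mono by (auto simp: e_def diff_left span_diff subset_iff)
  show ?case
  proof (cases "e = 0")
    case True
    then have "b \<in> span B" using z(1) by (simp add: e_def)
    then have "span (insert b B) = span B" by (rule span_redundant)
    then show ?thesis using u' by blast
  next
    case False
    define u where "u = u' + ((\<psi> e - a u' e) / a e e) *\<^sub>R e"
    have "a e e \<noteq> 0" using definite e(1) span_V False by blast
    have in_V: "u' \<in> V" "e \<in> V"
      using u'(1) e(1) mono span_V by auto
    have u_B: "a u y = \<psi> y" if "y \<in> span B" for y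
      using that u' e mono span_V in_V by (auto simp: u_def add_left scale_left subspace_scale[OF subspace_V])
    have u_e: "a u e = \<psi> e"
      using \<open>a e e \<noteq> 0\<close> in_V by (simp add: u_def add_left scale_left subspace_scale[OF subspace_V])
    have "u \<in> span (insert b B)"
      using u'(1) e(1) mono by (auto simp: u_def intro: span_add span_scale)
    moreover have "u \<in> V" using in_V by (simp add: u_def subspace_add subspace_scale subspace_V)
    then have "\<forall>y\<in>span (insert b B). a u y = \<psi> y"
      using representation_extends_to_insert[OF span_V _ z(1) u_B] u_e insert.prems(2,3)
      unfolding e_def by blast
    ultimately show ?thesis by blast
  qed
qed

lemma riesz_representation:
  assumes S: "subspace S" "S \<subseteq> V" "S \<subseteq> span F" "finite F"
    and \<psi>: "\<And>x y. x \<in> S \<Longrightarrow> y \<in> S \<Longrightarrow> \<psi> (x + y) = \<psi> x + \<psi> y"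
      "\<And>c x. x \<in> S \<Longrightarrow> \<psi> (c *\<^sub>R x) = c * \<psi> x"
  shows "\<exists>!u. u \<in> S \<and> (\<forall>s\<in>S. a u s = \<psi> s)"
proof -
  obtain B where B: "finite B" "B \<subseteq> S" "span B = S"
    using finite_span_basis_of_subspace[OF S(1,3,4)] by blast
  obtain u where u: "u \<in> S" "\<forall>s\<in>S. a u s = \<psi> s"
    using riesz_span[of B \<psi>] B S(2) \<psi> by auto
  moreover have "u' = u" if u': "u' \<in> S" "\<forall>s\<in>S. a u' s = \<psi> s" for u'
  proof -
    have d: "u' - u \<in> S" using u u' S(1) by (simp add: subspace_diff)
    have "a (u' - u) (u' - u) = a u' (u' - u) - a u (u' - u)"
      using u(1) u'(1) d S(2) by (intro diff_left) auto
    then have "a (u' - u) (u' - u) = 0"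
      using u u' d by simp
    then show ?thesis using definite[of "u' - u"] d S(2) by auto
  qed
  ultimately show ?thesis by blast
qed

lemma additive_schwarz_bound:
  assumes v: "v \<in> V" and dv: "a d d = a d v"
    and S: "\<And>i. i \<in> I \<Longrightarrow> S i \<subseteq> V"
    and w: "\<And>i. i \<in> I \<Longrightarrow> w i \<in> S i" and d_sum: "d = (\<Sum>i\<in>I. w i)"
    and p: "\<And>i. i \<in> I \<Longrightarrow> p i \<in> S i" "\<And>i s. i \<in> I \<Longrightarrow> s \<in> S i \<Longrightarrow> a (p i) s = a v s"
    and stable: "(\<Sum>i\<in>I. a (w i) (w i)) \<le> C * a d d" and C: "0 \<le> C"
  shows "a d d \<le> C * (\<Sum>i\<in>I. a (p i) v)"
proof (rule le_mult_of_parametric_bound[OF C _ stable])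
  have wV: "w i \<in> V" and pV: "p i \<in> V" if "i \<in> I" for i
    using that S w p by auto
  have pp: "a (p i) (p i) = a (p i) v" if i: "i \<in> I" for i
    using p(2)[OF i p(1)[OF i]] sym[of v "p i"] by linarith
  have wp: "a (w i) v = a (w i) (p i)" if i: "i \<in> I" for i
    using p(2)[OF i w[OF i]] sym[of "w i" v] sym[of "p i" "w i"] by linarith
  show "0 \<le> (\<Sum>i\<in>I. a (p i) v)"
  proof (rule sum_nonneg)
    fix i assume i: "i \<in> I"
    show "0 \<le> a (p i) v" using pp[OF i] nonneg[OF pV[OF i]] by simp
  qed
  fix t :: real assume t: "0 < t"
  have "2 * a d d = (\<Sum>i\<in>I. 2 * a (w i) (p i))"
    using dv wV wp v by (simp add: d_sum sum_left sum_distrib_left)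
  also have "\<dots> \<le> (\<Sum>i\<in>I. t * a (w i) (w i) + a (p i) v / t)"
    using two_mult_le[OF wV pV t] pp by (intro sum_mono) simp
  also have "\<dots> = t * (\<Sum>i\<in>I. a (w i) (w i)) + (\<Sum>i\<in>I. a (p i) v) / t"
    by (simp add: sum.distrib sum_distrib_left sum_divide_distrib)
  finally show "2 * a d d \<le> t * (\<Sum>i\<in>I. a (w i) (w i)) + (\<Sum>i\<in>I. a (p i) v) / t" .
qed

end

section \<open>Nedelec polynomials and their curl\<close>

lemma num3_cases: fixes i :: 3 obtains "i = 1" | "i = 2" | "i = 3"
  using exhaust_3 by blast

lemma ned_poly_component:
  "ned_poly a b c x $ 1 = a$1 + a$2 * x$2 + a$3 * x$3 + a$4 * x$2 * x$3"
  "ned_poly a b c x $ 2 = b$1 + b$2 * x$3 + b$3 * x$1 + b$4 * x$3 * x$1"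
  "ned_poly a b c x $ 3 = c$1 + c$2 * x$1 + c$3 * x$2 + c$4 * x$1 * x$2"
  by (simp_all add: ned_poly_def)

lemma ned_poly_add: "ned_poly a b c + ned_poly a' b' c' = ned_poly (a + a') (b + b') (c + c')"
  by (simp add: fun_eq_iff vec_eq_iff forall_3 ned_poly_component algebra_simps)

lemma ned_poly_scaleR: "r *\<^sub>R ned_poly a b c = ned_poly (r *\<^sub>R a) (r *\<^sub>R b) (r *\<^sub>R c)"
  by (simp add: fun_eq_iff vec_eq_iff forall_3 ned_poly_component algebra_simps)

lemma ned_poly_zero: "ned_poly 0 0 0 = 0"
  by (simp add: fun_eq_iff vec_eq_iff forall_3 ned_poly_component)

lemma subspace_ned_polys: "subspace ned_polys"
  unfolding subspace_def ned_polys_def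
  by (auto simp: ned_poly_add ned_poly_scaleR simp flip: ned_poly_zero) blast+

lemma continuous_on_ned_polys: "p \<in> ned_polys \<Longrightarrow> continuous_on UNIV p"
proof -
  have "continuous_on UNIV (\<lambda>x. \<chi> i. ned_poly a b c x $ i)" for a b c
  proof (rule continuous_on_vec_lambda)
    fix i :: 3
    show "continuous_on UNIV (\<lambda>x. ned_poly a b c x $ i)"
      by (cases i rule: num3_cases) (simp_all add: ned_poly_component; intro continuous_intros)+
  qed
  then show "p \<in> ned_polys \<Longrightarrow> continuous_on UNIV p"
    unfolding ned_polys_def by auto
qed

lemma axis_component: "(axis j (1::real) :: real^3) $ i = (if i = j then 1 else 0)"
  by (simp add: axis_def)

text \<open>Nedelec polynomials are affine along every coordinate line; hence partial derivatives
  are exact difference quotients with unit step.\<close>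

definition poly_pdiff :: "(pt \<Rightarrow> real^3) \<Rightarrow> 3 \<Rightarrow> 3 \<Rightarrow> pt \<Rightarrow> real" where
  "poly_pdiff p i j x = p (x + axis j 1) $ i - p x $ i"

definition poly_curl :: "(pt \<Rightarrow> real^3) \<Rightarrow> pt \<Rightarrow> real^3" where
  "poly_curl p x = vector [poly_pdiff p 3 2 x - poly_pdiff p 2 3 x,
     poly_pdiff p 1 3 x - poly_pdiff p 3 1 x, poly_pdiff p 2 1 x - poly_pdiff p 1 2 x]"

lemma ned_polys_affine_on_lines:
  assumes "p \<in> ned_polys"
  shows "p (x + t *\<^sub>R axis j 1) $ i = p x $ i + t * poly_pdiff p i j x"
  using assms unfolding ned_polys_def poly_pdiff_def
  by (cases i rule: num3_cases; cases j rule: num3_cases)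
     (auto simp: ned_poly_component axis_component algebra_simps)

lemma poly_curl_add: "poly_curl (p + q) x = poly_curl p x + poly_curl q x"
  by (simp add: poly_curl_def poly_pdiff_def vec_eq_iff forall_3)

lemma poly_curl_scaleR: "poly_curl (r *\<^sub>R p) x = r *\<^sub>R poly_curl p x"
  by (simp add: poly_curl_def poly_pdiff_def vec_eq_iff forall_3 algebra_simps)

lemma poly_curl_zero: "poly_curl 0 x = 0"
  by (simp add: poly_curl_def poly_pdiff_def vec_eq_iff forall_3)

lemma continuous_on_poly_curl:
  assumes p: "p \<in> ned_polys"
  shows "continuous_on UNIV (poly_curl p)"
proof -
  have c: "continuous_on UNIV p" by (rule continuous_on_ned_polys[OF p])
  have "continuous_on UNIV (\<lambda>x. p (x + axis j 1))" for j
    by (rule continuous_on_compose2[OF c]) (auto intro: continuous_intros)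
  then have pd: "continuous_on UNIV (poly_pdiff p i j)" for i j
    unfolding poly_pdiff_def using c by (intro continuous_on_diff continuous_on_component)
  have "continuous_on UNIV (\<lambda>x. \<chi> i. poly_curl p x $ i)"
  proof (rule continuous_on_vec_lambda)
    fix i :: 3
    show "continuous_on UNIV (\<lambda>x. poly_curl p x $ i)"
      by (cases i rule: num3_cases) (simp_all add: poly_curl_def continuous_on_diff pd)
  qed
  then show ?thesis by simp
qed

lemma curl_cong:
  assumes e: "0 < e" and eq: "\<forall>y\<in>ball x e. u y = w y"
  shows "curl u x = curl w x"
proof -
  have "pdiff u i j x = pdiff w i j x" for i j
    unfolding pdiff_def
  proof (rule deriv_cong_ev[OF _ refl])
    have "u (x + t *\<^sub>R axis j 1) $ i = w (x + t *\<^sub>R axis j 1) $ i" if "t \<in> ball 0 e" for t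
      using that eq by (simp add: dist_norm)
    then show "\<forall>\<^sub>F t in nhds 0. u (x + t *\<^sub>R axis j 1) $ i = w (x + t *\<^sub>R axis j 1) $ i"
      unfolding eventually_nhds using e by (intro exI[of _ "ball 0 e"]) auto
  qed
  then show ?thesis unfolding curl_def by simp
qed

lemma curl_ned_poly:
  assumes p: "p \<in> ned_polys"
  shows "curl p x = poly_curl p x"
proof -
  have "((\<lambda>t. p (x + t *\<^sub>R axis j 1) $ i) has_field_derivative poly_pdiff p i j x) (at 0)" for i j
    unfolding ned_polys_affine_on_lines[OF p] by (auto intro!: derivative_eq_intros)
  then have "pdiff p i j x = poly_pdiff p i j x" for i j
    unfolding pdiff_def by (rule DERIV_imp_deriv)
  then show ?thesis unfolding curl_def poly_curl_def by simp
qed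

lemma curl_locally_ned_poly:
  assumes "p \<in> ned_polys" "0 < e" "\<forall>y\<in>ball x e. u y = p y"
  shows "curl u x = poly_curl p x"
  using curl_cong[OF assms(2,3)] curl_ned_poly[OF assms(1)] by simp

section \<open>Piecewise Nedelec fields\<close>

definition boxes_in :: "pt \<Rightarrow> pt \<Rightarrow> bx set \<Rightarrow> bool" where
  "boxes_in lo hi M \<longleftrightarrow> finite M \<and> (\<forall>T\<in>M. nondeg T \<and> obx T \<subseteq> box lo hi) \<and>
     disjoint_family_on obx M"

definition piecewise_ned :: "bx set \<Rightarrow> (pt \<Rightarrow> real^3) set" where
  "piecewise_ned M = {u. (\<forall>T\<in>M. \<exists>p\<in>ned_polys. \<forall>x\<in>obx T. u x = p x) \<and>
     (\<forall>x. x \<notin> \<Union>(obx ` M) \<longrightarrow> u x = 0)}"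

definition skeleton :: "bx set \<Rightarrow> pt set" where
  "skeleton M = (\<Union>T\<in>M. cbx T - obx T)"

lemma boxes_inD:
  assumes "boxes_in lo hi M"
  shows "finite M" "T \<in> M \<Longrightarrow> nondeg T" "T \<in> M \<Longrightarrow> obx T \<subseteq> box lo hi"
    "T \<in> M \<Longrightarrow> T' \<in> M \<Longrightarrow> T \<noteq> T' \<Longrightarrow> obx T \<inter> obx T' = {}"
  using assms unfolding boxes_in_def disjoint_family_on_def by auto

lemma open_obx: "open (obx T)" by (simp add: obx_def open_box)
lemma closed_cbx: "closed (cbx T)" by (simp add: cbx_def closed_cbox)
lemma obx_subset_cbx: "obx T \<subseteq> cbx T" by (simp add: obx_def cbx_def box_subset_cbox)

lemma mem_obx: "x \<in> obx T \<longleftrightarrow> (\<forall>i. fst T $ i < x $ i \<and> x $ i < snd T $ i)"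
  by (simp add: obx_def mem_box_cart)

lemma mem_cbx: "x \<in> cbx T \<longleftrightarrow> (\<forall>i. fst T $ i \<le> x $ i \<and> x $ i \<le> snd T $ i)"
  by (simp add: cbx_def mem_box_cart)

lemma obx_nonempty: "nondeg T \<Longrightarrow> obx T \<noteq> {}"
proof -
  assume "nondeg T"
  then have "(1/2) *\<^sub>R (fst T + snd T) \<in> obx T"
    unfolding nondeg_def mem_obx by auto
  then show ?thesis by blast
qed

lemma closure_obx: "nondeg T \<Longrightarrow> closure (obx T) = cbx T"
  using obx_nonempty unfolding obx_def cbx_def by (simp add: closure_box)

lemma negligible_skeleton: "finite M \<Longrightarrow> negligible (skeleton M)"
  unfolding skeleton_def cbx_def obx_def
  by (intro negligible_Union) (auto intro: negligible_frontier_interval)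

lemma subspace_piecewise_ned: "subspace (piecewise_ned M)"
  unfolding subspace_def
proof (intro conjI ballI allI)
  show "0 \<in> piecewise_ned M"
    using subspace_0[OF subspace_ned_polys] unfolding piecewise_ned_def by (auto intro!: bexI[of _ 0])
next
  fix u w assume u: "u \<in> piecewise_ned M" and w: "w \<in> piecewise_ned M"
  have "\<exists>r\<in>ned_polys. \<forall>x\<in>obx T. (u + w) x = r x" if T: "T \<in> M" for T
  proof -
    obtain p q where "p \<in> ned_polys" "\<forall>x\<in>obx T. u x = p x" "q \<in> ned_polys" "\<forall>x\<in>obx T. w x = q x"
      using u w T unfolding piecewise_ned_def by blast
    then show ?thesis using subspace_add[OF subspace_ned_polys] by (intro bexI[of _ "p + q"]) auto
  qed
  then show "u + w \<in> piecewise_ned M" using u w unfolding piecewise_ned_def by auto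
next
  fix c u assume u: "u \<in> piecewise_ned M"
  have "\<exists>r\<in>ned_polys. \<forall>x\<in>obx T. (c *\<^sub>R u) x = r x" if T: "T \<in> M" for T
  proof -
    obtain p where "p \<in> ned_polys" "\<forall>x\<in>obx T. u x = p x"
      using u T unfolding piecewise_ned_def by blast
    then show ?thesis using subspace_scale[OF subspace_ned_polys] by (intro bexI[of _ "c *\<^sub>R p"]) auto
  qed
  then show "c *\<^sub>R u \<in> piecewise_ned M" using u unfolding piecewise_ned_def by auto
qed

lemma piecewise_ned_on_box:
  assumes u: "u \<in> piecewise_ned M" and T: "T \<in> M"
  shows "\<exists>p\<in>ned_polys. \<forall>x\<in>obx T. u x = p x \<and> curl u x = poly_curl p x"
proof -
  obtain p where p: "p \<in> ned_polys" "\<forall>x\<in>obx T. u x = p x"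
    using u T unfolding piecewise_ned_def by blast
  have "curl u x = poly_curl p x" if x: "x \<in> obx T" for x
  proof -
    obtain e where "0 < e" "ball x e \<subseteq> obx T" using open_obx x by (rule openE)
    then show ?thesis using p by (intro curl_locally_ned_poly) auto
  qed
  with p show ?thesis by blast
qed

lemma piecewise_ned_outside:
  assumes M: "finite M" and u: "u \<in> piecewise_ned M" and x: "x \<notin> (\<Union>T\<in>M. cbx T)"
  shows "u x = 0" "curl u x = 0"
proof -
  have "open (- (\<Union>T\<in>M. cbx T))" using M closed_cbx by (intro open_Compl closed_UN) auto
  then obtain e where e: "0 < e" "ball x e \<subseteq> - (\<Union>T\<in>M. cbx T)" using x by (auto elim: openE)
  then have "\<forall>y\<in>ball x e. u y = 0"
    using u obx_subset_cbx unfolding piecewise_ned_def by blast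
  then show "u x = 0" "curl u x = 0"
    using e(1) curl_locally_ned_poly[OF subspace_0[OF subspace_ned_polys] e(1)]
    by (auto simp: poly_curl_zero)
qed

lemma piecewise_ned_locally_poly:
  assumes M: "finite M" and u: "u \<in> piecewise_ned M" and x: "x \<notin> skeleton M"
  obtains p e where "p \<in> ned_polys" "0 < e" "\<forall>y\<in>ball x e. u y = p y"
proof (cases "\<exists>T\<in>M. x \<in> obx T")
  case True
  then obtain T where T: "T \<in> M" "x \<in> obx T" by blast
  obtain p where p: "p \<in> ned_polys" "\<forall>y\<in>obx T. u y = p y"
    using u T(1) unfolding piecewise_ned_def by blast
  obtain e where "0 < e" "ball x e \<subseteq> obx T" using open_obx T(2) by (rule openE)
  then show ?thesis using p that by blast
next
  case False
  then have x': "x \<notin> (\<Union>T\<in>M. cbx T)" using x unfolding skeleton_def by blast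
  have "open (- (\<Union>T\<in>M. cbx T))" using M closed_cbx by (intro open_Compl closed_UN) auto
  then obtain e where e: "0 < e" "ball x e \<subseteq> - (\<Union>T\<in>M. cbx T)" using x' by (auto elim: openE)
  then have "\<forall>y\<in>ball x e. u y = 0 y"
    using piecewise_ned_outside(1)[OF M u] by auto
  then show ?thesis using e(1) subspace_0[OF subspace_ned_polys] that by blast
qed

lemma curl_add_off_skeleton:
  assumes M: "finite M" and u: "u \<in> piecewise_ned M" and w: "w \<in> piecewise_ned M"
    and x: "x \<notin> skeleton M"
  shows "curl (u + w) x = curl u x + curl w x"
proof -
  obtain p e where p: "p \<in> ned_polys" "0 < e" "\<forall>y\<in>ball x e. u y = p y"
    using piecewise_ned_locally_poly[OF M u x] .
  obtain q e' where q: "q \<in> ned_polys" "0 < e'" "\<forall>y\<in>ball x e'. w y = q y"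
    using piecewise_ned_locally_poly[OF M w x] .
  have "\<forall>y\<in>ball x (min e e'). (u + w) y = (p + q) y" using p(3) q(3) by auto
  then have "curl (u + w) x = poly_curl (p + q) x"
    using p q subspace_add[OF subspace_ned_polys] by (intro curl_locally_ned_poly[of "p + q" "min e e'"]) auto
  then show ?thesis
    using curl_locally_ned_poly[OF p] curl_locally_ned_poly[OF q] by (simp add: poly_curl_add)
qed

lemma curl_scaleR_off_skeleton:
  assumes M: "finite M" and u: "u \<in> piecewise_ned M" and x: "x \<notin> skeleton M"
  shows "curl (c *\<^sub>R u) x = c *\<^sub>R curl u x"
proof -
  obtain p e where p: "p \<in> ned_polys" "0 < e" "\<forall>y\<in>ball x e. u y = p y"
    using piecewise_ned_locally_poly[OF M u x] .
  have "\<forall>y\<in>ball x e. (c *\<^sub>R u) y = (c *\<^sub>R p) y" using p(3) by simp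
  then have "curl (c *\<^sub>R u) x = poly_curl (c *\<^sub>R p) x"
    using p subspace_scale[OF subspace_ned_polys] by (intro curl_locally_ned_poly) auto
  then show ?thesis
    using curl_locally_ned_poly[OF p] by (simp add: poly_curl_scaleR)
qed

lemma has_integral_piecewise:
  fixes f :: "pt \<Rightarrow> real"
  assumes M: "boxes_in lo hi M"
    and G: "\<And>T. T \<in> M \<Longrightarrow> continuous_on UNIV (G T)" "\<And>T x. T \<in> M \<Longrightarrow> x \<in> obx T \<Longrightarrow> f x = G T x"
    and outside: "\<And>x. x \<notin> (\<Union>T\<in>M. cbx T) \<Longrightarrow> f x = 0"
  shows "(f has_integral (\<Sum>T\<in>M. integral (obx T) (G T))) (box lo hi)"
proof -
  note fin = boxes_inD(1)[OF M]
  define g where "g x = (\<Sum>T\<in>M. if x \<in> obx T then G T x else 0)" for x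
  have "((\<lambda>x. if x \<in> obx T then G T x else 0) has_integral integral (obx T) (G T)) (box lo hi)"
    if T: "T \<in> M" for T
  proof -
    have sub: "obx T \<inter> box lo hi = obx T" using boxes_inD(3)[OF M T] by blast
    have "G T integrable_on cbox (fst T) (snd T)"
      using G(1)[OF T] by (intro integrable_continuous) (auto intro: continuous_on_subset)
    then have "G T integrable_on obx T" unfolding obx_def by (simp add: integrable_on_open_interval)
    then have "(\<lambda>x. if x \<in> obx T then G T x else 0) integrable_on box lo hi"
      and "integral (box lo hi) (\<lambda>x. if x \<in> obx T then G T x else 0) = integral (obx T) (G T)"
      using sub by (simp_all add: integrable_restrict_Int integral_restrict_Int)
    then show ?thesis by (metis has_integral_integrable_integral)
  qed
  then have g: "(g has_integral (\<Sum>T\<in>M. integral (obx T) (G T))) (box lo hi)"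
    unfolding g_def by (rule has_integral_sum[OF fin])
  show ?thesis
  proof (rule has_integral_spike[OF negligible_skeleton[OF fin] _ g])
    fix x assume x: "x \<in> box lo hi - skeleton M"
    show "f x = g x"
    proof (cases "\<exists>T\<in>M. x \<in> obx T")
      case True
      then obtain T where T: "T \<in> M" "x \<in> obx T" by blast
      have "g x = (\<Sum>T'\<in>M. if T' = T then G T x else 0)"
        unfolding g_def using boxes_inD(4)[OF M _ T(1)] T(2) by (intro sum.cong) auto
      then show ?thesis using T fin G(2) by simp
    next
      case False
      then show ?thesis
        using x outside unfolding g_def skeleton_def by (auto intro: sum.neutral)
    qed
  qed
qed

lemma piecewise_integral_eq_0:
  fixes f :: "pt \<Rightarrow> real"
  assumes M: "boxes_in lo hi M"
    and G: "\<And>T. T \<in> M \<Longrightarrow> continuous_on UNIV (G T)" "\<And>T x. T \<in> M \<Longrightarrow> x \<in> obx T \<Longrightarrow> f x = G T x"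
    and outside: "\<And>x. x \<notin> (\<Union>T\<in>M. cbx T) \<Longrightarrow> f x = 0"
    and nonneg: "\<And>T x. T \<in> M \<Longrightarrow> 0 \<le> G T x"
    and zero: "integral (box lo hi) f = 0"
    and T: "T \<in> M" and x: "x \<in> obx T"
  shows "G T x = 0"
proof -
  have int: "G T integrable_on cbox (fst T) (snd T)" "G T integrable_on obx T" if "T \<in> M" for T
    using G(1)[OF that] unfolding obx_def
    by (auto intro!: integrable_continuous intro: continuous_on_subset simp: integrable_on_open_interval)
  have nonneg_int: "0 \<le> integral (obx T) (G T)" if "T \<in> M" for T
    using nonneg[OF that] by (intro integral_nonneg[OF int(2)[OF that]]) auto
  have "(\<Sum>T\<in>M. integral (obx T) (G T)) = 0"
    using integral_unique[OF has_integral_piecewise[OF M G outside]] zero by simp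
  then have "integral (obx T) (G T) = 0"
    using boxes_inD(1)[OF M] T nonneg_int by (simp add: sum_nonneg_eq_0_iff)
  then have "integral (cbox (fst T) (snd T)) (G T) = 0"
    unfolding obx_def by (simp add: integral_open_interval)
  then have "(G T has_integral 0) (cbox (fst T) (snd T))"
    using int(1)[OF T] by (metis has_integral_integrable_integral)
  moreover have "continuous_on (cbox (fst T) (snd T)) (G T)"
    using G(1)[OF T] by (auto intro: continuous_on_subset)
  moreover have "box (fst T) (snd T) \<noteq> {}"
    using obx_nonempty[OF boxes_inD(2)[OF M T]] by (simp add: obx_def)
  moreover have "x \<in> cbox (fst T) (snd T)" using x obx_subset_cbx[of T] unfolding cbx_def by blast
  ultimately show ?thesis
    using has_integral_0_cbox_imp_0[of "fst T" "snd T" "G T" x] nonneg[OF T] by blast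
qed

lemma piecewise_ned_pieces:
  assumes "u \<in> piecewise_ned M"
  obtains P where "\<And>T. T \<in> M \<Longrightarrow> P T \<in> ned_polys"
    "\<And>T x. T \<in> M \<Longrightarrow> x \<in> obx T \<Longrightarrow> u x = P T x \<and> curl u x = poly_curl (P T) x"
proof -
  obtain P where "\<forall>T\<in>M. P T \<in> ned_polys \<and> (\<forall>x\<in>obx T. u x = P T x \<and> curl u x = poly_curl (P T) x)"
    using piecewise_ned_on_box[OF assms] by metis
  then show ?thesis using that by blast
qed

lemma aform_integrable:
  assumes M: "boxes_in lo hi M" and u: "u \<in> piecewise_ned M" and w: "w \<in> piecewise_ned M"
  shows "(\<lambda>x. u x \<bullet> w x) integrable_on box lo hi"
    "(\<lambda>x. curl u x \<bullet> curl w x) integrable_on box lo hi"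
proof -
  note fin = boxes_inD(1)[OF M]
  obtain P where P: "\<And>T. T \<in> M \<Longrightarrow> P T \<in> ned_polys"
    "\<And>T x. T \<in> M \<Longrightarrow> x \<in> obx T \<Longrightarrow> u x = P T x \<and> curl u x = poly_curl (P T) x"
    using piecewise_ned_pieces[OF u] by blast
  obtain Q where Q: "\<And>T. T \<in> M \<Longrightarrow> Q T \<in> ned_polys"
    "\<And>T x. T \<in> M \<Longrightarrow> x \<in> obx T \<Longrightarrow> w x = Q T x \<and> curl w x = poly_curl (Q T) x"
    using piecewise_ned_pieces[OF w] by blast
  have "((\<lambda>x. u x \<bullet> w x) has_integral (\<Sum>T\<in>M. integral (obx T) (\<lambda>x. P T x \<bullet> Q T x))) (box lo hi)"
    by (rule has_integral_piecewise[OF M])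
      (use P Q piecewise_ned_outside(1)[OF fin u] in \<open>auto intro!: continuous_on_inner continuous_on_ned_polys\<close>)
  then show "(\<lambda>x. u x \<bullet> w x) integrable_on box lo hi" by blast
  have "((\<lambda>x. curl u x \<bullet> curl w x) has_integral
      (\<Sum>T\<in>M. integral (obx T) (\<lambda>x. poly_curl (P T) x \<bullet> poly_curl (Q T) x))) (box lo hi)"
    by (rule has_integral_piecewise[OF M])
      (use P Q piecewise_ned_outside(2)[OF fin u] in \<open>auto intro!: continuous_on_inner continuous_on_poly_curl\<close>)
  then show "(\<lambda>x. curl u x \<bullet> curl w x) integrable_on box lo hi" by blast
qed

lemma aform_add_left:
  assumes M: "boxes_in lo hi M"
    and u: "u \<in> piecewise_ned M" and w: "w \<in> piecewise_ned M" and z: "z \<in> piecewise_ned M"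
  shows "aform \<alpha> lo hi (u + w) z = aform \<alpha> lo hi u z + aform \<alpha> lo hi w z"
proof -
  note fin = boxes_inD(1)[OF M]
  have "integral (box lo hi) (\<lambda>x. curl (u + w) x \<bullet> curl z x)
      = integral (box lo hi) (\<lambda>x. curl u x \<bullet> curl z x + curl w x \<bullet> curl z x)"
    by (rule integral_spike[OF negligible_skeleton[OF fin]])
      (simp add: curl_add_off_skeleton[OF fin u w] inner_add_left)
  also have "\<dots> = integral (box lo hi) (\<lambda>x. curl u x \<bullet> curl z x) + integral (box lo hi) (\<lambda>x. curl w x \<bullet> curl z x)"
    using aform_integrable[OF M] u w z by (intro integral_add)
  finally have curls: "integral (box lo hi) (\<lambda>x. curl (u + w) x \<bullet> curl z x)
      = integral (box lo hi) (\<lambda>x. curl u x \<bullet> curl z x) + integral (box lo hi) (\<lambda>x. curl w x \<bullet> curl z x)" .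
  have "integral (box lo hi) (\<lambda>x. (u + w) x \<bullet> z x)
      = integral (box lo hi) (\<lambda>x. u x \<bullet> z x) + integral (box lo hi) (\<lambda>x. w x \<bullet> z x)"
    using aform_integrable[OF M] u w z by (simp add: inner_add_left integral_add)
  with curls show ?thesis by (simp add: aform_def algebra_simps)
qed

lemma aform_scaleR_left:
  assumes M: "boxes_in lo hi M" and u: "u \<in> piecewise_ned M"
  shows "aform \<alpha> lo hi (c *\<^sub>R u) z = c * aform \<alpha> lo hi u z"
proof -
  note fin = boxes_inD(1)[OF M]
  have "integral (box lo hi) (\<lambda>x. curl (c *\<^sub>R u) x \<bullet> curl z x)
      = integral (box lo hi) (\<lambda>x. c * (curl u x \<bullet> curl z x))"
    by (rule integral_spike[OF negligible_skeleton[OF fin]])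
      (simp add: curl_scaleR_off_skeleton[OF fin u])
  then show ?thesis by (simp add: aform_def algebra_simps)
qed

lemma piecewise_ned_eq_0:
  assumes M: "boxes_in lo hi M" and u: "u \<in> piecewise_ned M"
    and int0: "integral (box lo hi) (\<lambda>x. u x \<bullet> u x) = 0"
  shows "u = 0"
proof
  fix x
  obtain P where P: "\<And>T. T \<in> M \<Longrightarrow> P T \<in> ned_polys"
    "\<And>T x. T \<in> M \<Longrightarrow> x \<in> obx T \<Longrightarrow> u x = P T x \<and> curl u x = poly_curl (P T) x"
    using piecewise_ned_pieces[OF u] by blast
  have cont: "\<And>T. T \<in> M \<Longrightarrow> continuous_on UNIV (\<lambda>x. P T x \<bullet> P T x)"
    using P(1) by (intro continuous_on_inner continuous_on_ned_polys)
  have on_box: "\<And>T x. T \<in> M \<Longrightarrow> x \<in> obx T \<Longrightarrow> u x \<bullet> u x = P T x \<bullet> P T x"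
    using P(2) by simp
  have outside: "\<And>x. x \<notin> (\<Union>T\<in>M. cbx T) \<Longrightarrow> u x \<bullet> u x = 0"
    using piecewise_ned_outside(1)[OF boxes_inD(1)[OF M] u] by simp
  show "u x = 0 x"
  proof (cases "\<exists>T\<in>M. x \<in> obx T")
    case True
    then obtain T where T: "T \<in> M" "x \<in> obx T" by blast
    have "P T x \<bullet> P T x = 0"
      by (rule piecewise_integral_eq_0[OF M cont on_box outside _ int0 T]) simp_all
    then show ?thesis using P(2)[OF T] by simp
  next
    case False
    then show ?thesis using u unfolding piecewise_ned_def by auto
  qed
qed

lemma pos_def_form_aform:
  assumes \<alpha>: "0 \<le> \<alpha>" and M: "boxes_in lo hi M"
  shows "pos_def_form (piecewise_ned M) (aform \<alpha> lo hi)"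
proof
  have parts_nonneg: "0 \<le> \<alpha> * integral (box lo hi) (\<lambda>x. curl u x \<bullet> curl u x)"
    "0 \<le> integral (box lo hi) (\<lambda>x. u x \<bullet> u x)" if u: "u \<in> piecewise_ned M" for u
    using aform_integrable[OF M u u] \<alpha> by (simp_all add: integral_nonneg)
  show "subspace (piecewise_ned M)" by (rule subspace_piecewise_ned)
  show "aform \<alpha> lo hi (u + w) z = aform \<alpha> lo hi u z + aform \<alpha> lo hi w z"
    if "u \<in> piecewise_ned M" "w \<in> piecewise_ned M" "z \<in> piecewise_ned M" for u w z
    using aform_add_left[OF M that] .
  show "aform \<alpha> lo hi (c *\<^sub>R u) z = c * aform \<alpha> lo hi u z"
    if "u \<in> piecewise_ned M" for u z c
    using aform_scaleR_left[OF M that] .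
  show "aform \<alpha> lo hi u w = aform \<alpha> lo hi w u" for u w
    by (simp add: aform_def inner_commute)
  show "0 \<le> aform \<alpha> lo hi u u" if "u \<in> piecewise_ned M" for u
    using parts_nonneg[OF that] by (simp add: aform_def)
  show "u = 0" if u: "u \<in> piecewise_ned M" and zero: "aform \<alpha> lo hi u u = 0" for u
    using parts_nonneg[OF u] zero
    by (intro piecewise_ned_eq_0[OF M u]) (simp add: aform_def)
qed

definition poly_on_box :: "bx \<Rightarrow> (real^4) \<times> (real^4) \<times> (real^4) \<Rightarrow> pt \<Rightarrow> real^3" where
  "poly_on_box T z x = (if x \<in> obx T then ned_poly (fst z) (fst (snd z)) (snd (snd z)) x else 0)"

lemma linear_poly_on_box: "linear (poly_on_box T)"
  by (rule linearI) (auto simp: poly_on_box_def fun_eq_iff vec_eq_iff forall_3 ned_poly_component algebra_simps)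

lemma piecewise_ned_sum_poly_on_box:
  assumes M: "boxes_in lo hi M" and u: "u \<in> piecewise_ned M"
  obtains Z where "u = (\<Sum>T\<in>M. poly_on_box T (Z T))"
proof -
  have "\<forall>T\<in>M. \<exists>z. \<forall>x\<in>obx T. u x = ned_poly (fst z) (fst (snd z)) (snd (snd z)) x"
    using u unfolding piecewise_ned_def ned_polys_def by fastforce
  then obtain Z where Z: "\<And>T x. T \<in> M \<Longrightarrow> x \<in> obx T \<Longrightarrow> u x = poly_on_box T (Z T) x"
    unfolding poly_on_box_def by metis
  have "u x = (\<Sum>T\<in>M. poly_on_box T (Z T)) x" for x
  proof (cases "\<exists>T\<in>M. x \<in> obx T")
    case True
    then obtain T where T: "T \<in> M" "x \<in> obx T" by blast
    have "(\<Sum>T'\<in>M. poly_on_box T' (Z T') x) = (\<Sum>T'\<in>M. if T' = T then u x else 0)"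
    proof (rule sum.cong)
      fix T' assume T': "T' \<in> M"
      show "poly_on_box T' (Z T') x = (if T' = T then u x else 0)"
        using Z[OF T] boxes_inD(4)[OF M T' T(1)] T(2) by (auto simp: poly_on_box_def)
    qed simp
    then show ?thesis using boxes_inD(1)[OF M] T by simp
  next
    case False
    then show ?thesis using u unfolding piecewise_ned_def poly_on_box_def by auto
  qed
  then show ?thesis using that by blast
qed

lemma piecewise_ned_finite_span:
  assumes M: "boxes_in lo hi M"
  obtains F where "finite F" "piecewise_ned M \<subseteq> span F"
proof
  show "finite (\<Union>T\<in>M. poly_on_box T ` Basis)" using boxes_inD(1)[OF M] by simp
  have in_span: "poly_on_box T z \<in> span (\<Union>T\<in>M. poly_on_box T ` Basis)" if "T \<in> M" for T z
  proof -
    have "poly_on_box T z \<in> span (poly_on_box T ` Basis)"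
      by (simp add: span_linear_image[OF linear_poly_on_box])
    also have "\<dots> \<subseteq> span (\<Union>T\<in>M. poly_on_box T ` Basis)" using that by (intro span_mono) blast
    finally show ?thesis .
  qed
  show "piecewise_ned M \<subseteq> span (\<Union>T\<in>M. poly_on_box T ` Basis)"
  proof
    fix u assume "u \<in> piecewise_ned M"
    then obtain Z where "u = (\<Sum>T\<in>M. poly_on_box T (Z T))"
      using piecewise_ned_sum_poly_on_box[OF M] by blast
    then show "u \<in> span (\<Union>T\<in>M. poly_on_box T ` Basis)"
      using in_span by (simp add: span_sum)
  qed
qed

lemma aform_riesz:
  assumes \<alpha>: "0 \<le> \<alpha>" and M: "boxes_in lo hi M"
    and S: "subspace S" "S \<subseteq> piecewise_ned M"
    and \<psi>: "\<And>x y. x \<in> S \<Longrightarrow> y \<in> S \<Longrightarrow> \<psi> (x + y) = \<psi> x + \<psi> y"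
      "\<And>c x. x \<in> S \<Longrightarrow> \<psi> (c *\<^sub>R x) = c * \<psi> x"
  shows "\<exists>!u. u \<in> S \<and> (\<forall>s\<in>S. aform \<alpha> lo hi u s = \<psi> s)"
proof -
  interpret pos_def_form "piecewise_ned M" "aform \<alpha> lo hi"
    by (rule pos_def_form_aform[OF \<alpha> M])
  obtain F where "finite F" "piecewise_ned M \<subseteq> span F"
    using piecewise_ned_finite_span[OF M] .
  then show ?thesis
    using S \<psi> by (intro riesz_representation) auto
qed

section \<open>The Nedelec space and its degrees of freedom\<close>

lemma loc_spec:
  assumes "u \<in> piecewise_ned M" "T \<in> M"
  shows "loc u T \<in> ned_polys" "\<forall>x\<in>obx T. u x = loc u T x"
proof -
  have "\<exists>p. p \<in> ned_polys \<and> (\<forall>x\<in>obx T. u x = p x)"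
    using assms unfolding piecewise_ned_def by blast
  then have "loc u T \<in> ned_polys \<and> (\<forall>x\<in>obx T. u x = loc u T x)"
    unfolding loc_def by (rule someI_ex)
  then show "loc u T \<in> ned_polys" "\<forall>x\<in>obx T. u x = loc u T x" by auto
qed

lemma ned_polys_eq_on_cbx:
  assumes "p \<in> ned_polys" "q \<in> ned_polys" "nondeg T" "\<forall>x\<in>obx T. p x = q x" "x \<in> cbx T"
  shows "p x = q x"
proof -
  have "closed {x. p x = q x}"
    using continuous_on_ned_polys assms(1,2) by (intro closed_Collect_eq) auto
  then have "closure (obx T) \<subseteq> {x. p x = q x}"
    using assms(4) by (intro closure_minimal) auto
  then show ?thesis using closure_obx[OF assms(3)] assms(5) by blast
qed

lemma is_face_cases:
  assumes "is_face T F"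
  shows "(fst F $ i = fst T $ i \<and> snd F $ i = snd T $ i) \<or> (fst F $ i = fst T $ i \<and> snd F $ i = fst T $ i)
    \<or> (fst F $ i = snd T $ i \<and> snd F $ i = snd T $ i)"
  using assms unfolding is_face_def by blast

lemma is_face_le:
  assumes "nondeg T" "is_face T F"
  shows "fst F $ i \<le> snd F $ i"
proof -
  have "fst T $ i < snd T $ i" using assms(1) unfolding nondeg_def by blast
  then show ?thesis using is_face_cases[OF assms(2), of i] by auto
qed

lemma cbx_face_subset:
  assumes "nondeg T" "is_face T F"
  shows "cbx F \<subseteq> cbx T"
proof
  fix x assume x: "x \<in> cbx F"
  show "x \<in> cbx T" unfolding mem_cbx
  proof
    fix i
    have "fst F $ i \<le> x $ i" "x $ i \<le> snd F $ i" using x unfolding mem_cbx by auto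
    moreover have "fst T $ i < snd T $ i" using assms(1) unfolding nondeg_def by blast
    ultimately show "fst T $ i \<le> x $ i \<and> x $ i \<le> snd T $ i"
      using is_face_cases[OF assms(2), of i] by (elim disjE conjE) linarith+
  qed
qed

lemma finite_faces_of_box: "finite {F. is_face T F}"
proof -
  define face where "face ab = ((\<chi> i. if fst ab i then fst T $ i else snd T $ i),
    (\<chi> i. if snd ab i then snd T $ i else fst T $ i))" for ab :: "(3 \<Rightarrow> bool) \<times> (3 \<Rightarrow> bool)"
  have "F = face (\<lambda>i. fst F $ i = fst T $ i, \<lambda>i. snd F $ i = snd T $ i)" if "is_face T F" for F
    using that unfolding is_face_def face_def by (auto simp: vec_eq_iff prod_eq_iff)
  then have "{F. is_face T F} \<subseteq> range face" by blast
  then show ?thesis by (rule finite_subset) simp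
qed

lemma finite_faces: "finite M \<Longrightarrow> finite (faces M j)"
proof -
  assume "finite M"
  moreover have "faces M j \<subseteq> (\<Union>T\<in>M. {F. is_face T F})" unfolding faces_def by blast
  ultimately show ?thesis using finite_faces_of_box by (meson finite_UN_I finite_subset)
qed

lemma loc_add_on_cbx:
  assumes M: "boxes_in lo hi M" and u: "u \<in> piecewise_ned M" and w: "w \<in> piecewise_ned M"
    and T: "T \<in> M" and x: "x \<in> cbx T"
  shows "loc (u + w) T x = loc u T x + loc w T x"
proof -
  have uw: "u + w \<in> piecewise_ned M" using u w subspace_add[OF subspace_piecewise_ned] by blast
  have "loc u T + loc w T \<in> ned_polys"
    using loc_spec(1)[OF u T] loc_spec(1)[OF w T] subspace_add[OF subspace_ned_polys] by blast
  moreover have "\<forall>y\<in>obx T. loc (u + w) T y = (loc u T + loc w T) y"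
    using loc_spec(2)[OF u T] loc_spec(2)[OF w T] loc_spec(2)[OF uw T] by auto
  ultimately show ?thesis
    using ned_polys_eq_on_cbx[OF loc_spec(1)[OF uw T] _ boxes_inD(2)[OF M T] _ x] by simp
qed

lemma loc_scaleR_on_cbx:
  assumes M: "boxes_in lo hi M" and u: "u \<in> piecewise_ned M"
    and T: "T \<in> M" and x: "x \<in> cbx T"
  shows "loc (c *\<^sub>R u) T x = c *\<^sub>R loc u T x"
proof -
  have cu: "c *\<^sub>R u \<in> piecewise_ned M" using u subspace_scale[OF subspace_piecewise_ned] by blast
  have "c *\<^sub>R loc u T \<in> ned_polys"
    using loc_spec(1)[OF u T] subspace_scale[OF subspace_ned_polys] by blast
  moreover have "\<forall>y\<in>obx T. loc (c *\<^sub>R u) T y = (c *\<^sub>R loc u T) y"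
    using loc_spec(2)[OF u T] loc_spec(2)[OF cu T] by auto
  ultimately show ?thesis
    using ned_polys_eq_on_cbx[OF loc_spec(1)[OF cu T] _ boxes_inD(2)[OF M T] _ x] by simp
qed

definition tangential_continuity :: "bx set \<Rightarrow> (pt \<Rightarrow> real^3) \<Rightarrow> bool" where
  "tangential_continuity M v \<longleftrightarrow> (\<forall>T\<in>M. \<forall>T'\<in>M. \<forall>F i. is_face T F \<and> is_face T' F \<and> fdim F = 2 \<and> fst F $ i = snd F $ i \<longrightarrow>
     (\<forall>x\<in>cbx F. \<forall>j. j \<noteq> i \<longrightarrow> loc v T x $ j = loc v T' x $ j))"

definition tangential_boundary_zero :: "pt \<Rightarrow> pt \<Rightarrow> bx set \<Rightarrow> (pt \<Rightarrow> real^3) \<Rightarrow> bool" where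
  "tangential_boundary_zero lo hi M v \<longleftrightarrow> (\<forall>T\<in>M. \<forall>F i. is_face T F \<and> fdim F = 2 \<and> fst F $ i = snd F $ i \<and> cbx F \<subseteq> frontier (box lo hi) \<longrightarrow>
     (\<forall>x\<in>cbx F. \<forall>j. j \<noteq> i \<longrightarrow> loc v T x $ j = 0))"

lemma ned_eq: "ned lo hi M = {v \<in> piecewise_ned M. tangential_continuity M v \<and> tangential_boundary_zero lo hi M v}"
  unfolding ned_def piecewise_ned_def tangential_continuity_def tangential_boundary_zero_def by auto

lemma ned_subset_piecewise_ned: "ned lo hi M \<subseteq> piecewise_ned M"
  unfolding ned_eq by blast

lemma loc_lincomb_on_face:
  assumes M: "boxes_in lo hi M" and u: "u \<in> piecewise_ned M" and w: "w \<in> piecewise_ned M"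
    and T: "T \<in> M" and F: "is_face T F" and x: "x \<in> cbx F"
  shows "loc (u + c *\<^sub>R w) T x = loc u T x + c *\<^sub>R loc w T x"
proof -
  have xT: "x \<in> cbx T" using cbx_face_subset[OF boxes_inD(2)[OF M T] F] x by blast
  have "c *\<^sub>R w \<in> piecewise_ned M" using w subspace_scale[OF subspace_piecewise_ned] by blast
  then show ?thesis
    using loc_add_on_cbx[OF M u _ T xT] loc_scaleR_on_cbx[OF M w T xT] by simp
qed

lemma tangential_continuity_lincomb:
  assumes M: "boxes_in lo hi M" and u: "u \<in> piecewise_ned M" and w: "w \<in> piecewise_ned M"
    and tu: "tangential_continuity M u" and tw: "tangential_continuity M w"
  shows "tangential_continuity M (u + c *\<^sub>R w)"
  unfolding tangential_continuity_def
proof (intro ballI allI impI)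
  fix T T' F i x j
  assume T: "T \<in> M" "T' \<in> M" and F: "is_face T F \<and> is_face T' F \<and> fdim F = 2 \<and> fst F $ i = snd F $ i"
    and x: "x \<in> cbx F" and j: "j \<noteq> i"
  have "loc u T x $ j = loc u T' x $ j" "loc w T x $ j = loc w T' x $ j"
    using tu tw T F x j unfolding tangential_continuity_def by blast+
  then show "loc (u + c *\<^sub>R w) T x $ j = loc (u + c *\<^sub>R w) T' x $ j"
    using loc_lincomb_on_face[OF M u w T(1) _ x, of c] loc_lincomb_on_face[OF M u w T(2) _ x, of c] F
    by (simp only: vector_add_component vector_scaleR_component)
qed

lemma tangential_boundary_zero_lincomb:
  assumes M: "boxes_in lo hi M" and u: "u \<in> piecewise_ned M" and w: "w \<in> piecewise_ned M"
    and tu: "tangential_boundary_zero lo hi M u" and tw: "tangential_boundary_zero lo hi M w"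
  shows "tangential_boundary_zero lo hi M (u + c *\<^sub>R w)"
  unfolding tangential_boundary_zero_def
proof (intro ballI allI impI)
  fix T F i x j
  assume T: "T \<in> M"
    and F: "is_face T F \<and> fdim F = 2 \<and> fst F $ i = snd F $ i \<and> cbx F \<subseteq> frontier (box lo hi)"
    and x: "x \<in> cbx F" and j: "j \<noteq> i"
  have "loc u T x $ j = 0" "loc w T x $ j = 0"
    using tu tw T F x j unfolding tangential_boundary_zero_def by blast+
  then show "loc (u + c *\<^sub>R w) T x $ j = 0"
    using loc_lincomb_on_face[OF M u w T _ x, of c] F by simp
qed

lemma subspace_ned:
  assumes M: "boxes_in lo hi M"
  shows "subspace (ned lo hi M)"
proof -
  have loc0: "loc 0 T x = 0" if "T \<in> M" "is_face T F" "x \<in> cbx F" for T F x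
    using loc_scaleR_on_cbx[OF M subspace_0[OF subspace_piecewise_ned] that(1), of x 0]
      cbx_face_subset[OF boxes_inD(2)[OF M that(1)] that(2)] that(3) by auto
  have "tangential_continuity M 0" "tangential_boundary_zero lo hi M 0"
    unfolding tangential_continuity_def tangential_boundary_zero_def
    by (auto simp: loc0)
  then have zero: "0 \<in> ned lo hi M"
    using subspace_0[OF subspace_piecewise_ned] unfolding ned_eq by blast
  have lincomb: "u + c *\<^sub>R w \<in> ned lo hi M" if "u \<in> ned lo hi M" "w \<in> ned lo hi M" for u w c
    using that tangential_continuity_lincomb[OF M] tangential_boundary_zero_lincomb[OF M]
      subspace_add[OF subspace_piecewise_ned] subspace_scale[OF subspace_piecewise_ned]
    unfolding ned_eq by simp
  have "c *\<^sub>R w \<in> ned lo hi M" if "w \<in> ned lo hi M" for w c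
    using lincomb[OF zero that] by simp
  moreover have "u + w \<in> ned lo hi M" if "u \<in> ned lo hi M" "w \<in> ned lo hi M" for u w
    using lincomb[OF that, of 1] by simp
  ultimately show ?thesis using zero unfolding subspace_def by blast
qed

lemma edge_in_element:
  assumes M: "boxes_in lo hi M" and e: "e \<in> faces M 1"
  shows "(SOME T. T \<in> M \<and> cbx e \<subseteq> cbx T) \<in> M \<and> cbx e \<subseteq> cbx (SOME T. T \<in> M \<and> cbx e \<subseteq> cbx T)"
    "\<And>i. fst e $ i \<le> snd e $ i"
proof -
  obtain T where T: "T \<in> M" "is_face T e" using e unfolding faces_def by blast
  have nd: "nondeg T" using boxes_inD(2)[OF M T(1)] .
  then have "T \<in> M \<and> cbx e \<subseteq> cbx T" using T cbx_face_subset by blast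
  then show "(SOME T. T \<in> M \<and> cbx e \<subseteq> cbx T) \<in> M \<and> cbx e \<subseteq> cbx (SOME T. T \<in> M \<and> cbx e \<subseteq> cbx T)"
    by (rule someI)
  show "fst e $ i \<le> snd e $ i" for i using is_face_le[OF nd T(2)] .
qed

lemma segment_in_cbx:
  assumes "\<And>i. fst e $ i \<le> snd e $ i" and "s \<in> {0..1::real}"
  shows "fst e + s *\<^sub>R (snd e - fst e) \<in> cbx e"
  unfolding mem_cbx
proof
  fix i
  have "0 \<le> s * (snd e $ i - fst e $ i)" "s * (snd e $ i - fst e $ i) \<le> snd e $ i - fst e $ i"
    using assms(1)[of i] assms(2) by (auto simp: mult_left_le_one_le)
  then show "fst e $ i \<le> (fst e + s *\<^sub>R (snd e - fst e)) $ i \<and> (fst e + s *\<^sub>R (snd e - fst e)) $ i \<le> snd e $ i"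
    by simp
qed

lemma dof_linear:
  assumes M: "boxes_in lo hi M" and e: "e \<in> faces M 1"
    and u: "u \<in> piecewise_ned M" and w: "w \<in> piecewise_ned M"
  shows "dof M (u + w) e = dof M u e + dof M w e" "dof M (r *\<^sub>R u) e = r * dof M u e"
proof -
  define T where "T = (SOME T. T \<in> M \<and> cbx e \<subseteq> cbx T)"
  have T: "T \<in> M" "cbx e \<subseteq> cbx T" using edge_in_element(1)[OF M e] unfolding T_def by auto
  define c d where "c = fst e" and "d = snd e"
  have on_T: "c + s *\<^sub>R (d - c) \<in> cbx T" if "s \<in> {0..1}" for s
    using segment_in_cbx[OF edge_in_element(2)[OF M e] that] T(2) unfolding c_def d_def by blast
  have integrable: "(\<lambda>s. loc v T (c + s *\<^sub>R (d - c)) \<bullet> (d - c)) integrable_on {0..1}"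
    if "v \<in> piecewise_ned M" for v
  proof -
    have "continuous_on {0..1} (\<lambda>s::real. loc v T (c + s *\<^sub>R (d - c)))"
      by (rule continuous_on_compose2[OF continuous_on_ned_polys[OF loc_spec(1)[OF that T(1)]]])
        (intro continuous_intros, simp)
    then show ?thesis by (intro integrable_continuous_real continuous_intros)
  qed
  have dof_eq: "dof M v e = (1 / norm (d - c)) * integral {0..1} (\<lambda>s. loc v T (c + s *\<^sub>R (d - c)) \<bullet> (d - c))" for v
    unfolding dof_def Let_def T_def c_def d_def ..
  have "integral {0..1} (\<lambda>s. loc (u + w) T (c + s *\<^sub>R (d - c)) \<bullet> (d - c))
     = integral {0..1} (\<lambda>s. loc u T (c + s *\<^sub>R (d - c)) \<bullet> (d - c) + loc w T (c + s *\<^sub>R (d - c)) \<bullet> (d - c))"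
    by (rule integral_cong) (simp add: loc_add_on_cbx[OF M u w T(1) on_T] inner_add_left)
  also have "\<dots> = integral {0..1} (\<lambda>s. loc u T (c + s *\<^sub>R (d - c)) \<bullet> (d - c))
      + integral {0..1} (\<lambda>s. loc w T (c + s *\<^sub>R (d - c)) \<bullet> (d - c))"
    by (rule integral_add[OF integrable[OF u] integrable[OF w]])
  finally show "dof M (u + w) e = dof M u e + dof M w e"
    unfolding dof_eq by (simp add: algebra_simps)
  have "integral {0..1} (\<lambda>s. loc (r *\<^sub>R u) T (c + s *\<^sub>R (d - c)) \<bullet> (d - c))
     = integral {0..1} (\<lambda>s. r * (loc u T (c + s *\<^sub>R (d - c)) \<bullet> (d - c)))"
    by (rule integral_cong) (simp add: loc_scaleR_on_cbx[OF M u T(1) on_T])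
  then show "dof M (r *\<^sub>R u) e = r * dof M u e"
    unfolding dof_eq by simp
qed

section \<open>Uniform refinement\<close>

definition child :: "bx \<Rightarrow> (3 \<Rightarrow> bool) \<Rightarrow> bx" where
  "child T s = (let a = fst T; b = snd T; m = (1/2) *\<^sub>R (a + b) in
     ((\<chi> i. if s i then m $ i else a $ i), (\<chi> i. if s i then b $ i else m $ i)))"

lemma child_component:
  "fst (child T s) $ i = (if s i then (fst T $ i + snd T $ i) / 2 else fst T $ i)"
  "snd (child T s) $ i = (if s i then snd T $ i else (fst T $ i + snd T $ i) / 2)"
  by (simp_all add: child_def Let_def)

lemma refine_box_eq: "refine_box T = range (child T)"
  unfolding refine_box_def child_def Let_def by auto

lemma mem_refine: "T' \<in> refine M \<longleftrightarrow> (\<exists>T\<in>M. \<exists>s. T' = child T s)"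
  unfolding refine_def refine_box_eq by auto

lemma obx_child_subset: "obx (child T s) \<subseteq> obx T"
proof
  fix x assume x: "x \<in> obx (child T s)"
  show "x \<in> obx T" unfolding mem_obx
  proof
    fix i
    have "fst (child T s) $ i < x $ i \<and> x $ i < snd (child T s) $ i"
      using x unfolding mem_obx by blast
    then show "fst T $ i < x $ i \<and> x $ i < snd T $ i" unfolding child_component by (cases "s i") auto
  qed
qed

lemma nondeg_child: "nondeg T \<Longrightarrow> nondeg (child T s)"
  unfolding nondeg_def child_component by auto

lemma cbx_child_subset:
  assumes "nondeg T"
  shows "cbx (child T s) \<subseteq> cbx T"
proof
  fix x assume x: "x \<in> cbx (child T s)"
  show "x \<in> cbx T" unfolding mem_cbx
  proof
    fix i
    have "fst (child T s) $ i \<le> x $ i \<and> x $ i \<le> snd (child T s) $ i"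
      using x unfolding mem_cbx by blast
    moreover have "fst T $ i < snd T $ i" using assms unfolding nondeg_def by blast
    ultimately show "fst T $ i \<le> x $ i \<and> x $ i \<le> snd T $ i"
      unfolding child_component by (cases "s i") auto
  qed
qed

lemma obx_children_disjoint:
  assumes "s \<noteq> s'"
  shows "obx (child T s) \<inter> obx (child T s') = {}"
proof -
  obtain i where i: "s i \<noteq> s' i" using assms by blast
  show ?thesis
  proof (rule ccontr)
    assume "obx (child T s) \<inter> obx (child T s') \<noteq> {}"
    then obtain x where "x \<in> obx (child T s)" "x \<in> obx (child T s')" by blast
    then have "fst (child T s) $ i < x $ i \<and> x $ i < snd (child T s) $ i"
      "fst (child T s') $ i < x $ i \<and> x $ i < snd (child T s') $ i"
      unfolding mem_obx by blast+
    then show False using i unfolding child_component by (cases "s i") auto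
  qed
qed

lemma cbx_child_cover: "x \<in> cbx T \<Longrightarrow> x \<in> cbx (child T (\<lambda>i. (fst T $ i + snd T $ i) / 2 \<le> x $ i))"
  unfolding mem_cbx child_component by auto

lemma boxes_in_refine:
  assumes M: "boxes_in lo hi M"
  shows "boxes_in lo hi (refine M)"
  unfolding boxes_in_def disjoint_family_on_def
proof (intro conjI ballI impI)
  show "finite (refine M)"
    unfolding refine_def refine_box_eq using boxes_inD(1)[OF M] by simp
next
  fix T' assume "T' \<in> refine M"
  then obtain T s where T: "T \<in> M" "T' = child T s" unfolding mem_refine by blast
  then show "nondeg T'" using nondeg_child[OF boxes_inD(2)[OF M T(1)]] by simp
  show "obx T' \<subseteq> box lo hi" using T obx_child_subset boxes_inD(3)[OF M T(1)] by blast
next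
  fix T1 T2 assume "T1 \<in> refine M" "T2 \<in> refine M" and ne: "T1 \<noteq> T2"
  then obtain A s B s' where A: "A \<in> M" "T1 = child A s" and B: "B \<in> M" "T2 = child B s'"
    unfolding mem_refine by blast
  show "obx T1 \<inter> obx T2 = {}"
  proof (cases "A = B")
    case True
    with A B ne have "s \<noteq> s'" by blast
    then show ?thesis using A B True obx_children_disjoint by simp
  next
    case False
    then show ?thesis
      using A B obx_child_subset boxes_inD(4)[OF M A(1) B(1)] by blast
  qed
qed

lemma cbx_refine:
  assumes "\<And>T. T \<in> M \<Longrightarrow> nondeg T"
  shows "(\<Union>T\<in>refine M. cbx T) = (\<Union>T\<in>M. cbx T)"
proof
  show "(\<Union>T\<in>refine M. cbx T) \<subseteq> (\<Union>T\<in>M. cbx T)"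
  proof
    fix x assume "x \<in> (\<Union>T\<in>refine M. cbx T)"
    then obtain T' where "T' \<in> refine M" "x \<in> cbx T'" by blast
    then obtain T s where T: "T \<in> M" "x \<in> cbx (child T s)" unfolding mem_refine by blast
    then show "x \<in> (\<Union>T\<in>M. cbx T)" using cbx_child_subset[OF assms[OF T(1)]] by blast
  qed
  show "(\<Union>T\<in>M. cbx T) \<subseteq> (\<Union>T\<in>refine M. cbx T)"
  proof
    fix x assume "x \<in> (\<Union>T\<in>M. cbx T)"
    then obtain T where T: "T \<in> M" "x \<in> cbx T" by blast
    then have "child T (\<lambda>i. (fst T $ i + snd T $ i) / 2 \<le> x $ i) \<in> refine M"
      unfolding mem_refine by blast
    then show "x \<in> (\<Union>T\<in>refine M. cbx T)" using cbx_child_cover[OF T(2)] by blast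
  qed
qed

lemma boxes_in_box_mesh:
  assumes "box_mesh lo hi T0"
  shows "boxes_in lo hi T0"
  unfolding boxes_in_def disjoint_family_on_def
proof (intro conjI ballI impI)
  show "finite T0" using assms unfolding box_mesh_def by blast
next
  fix T assume T: "T \<in> T0"
  then show "nondeg T" using assms unfolding box_mesh_def by blast
  have "cbx T \<subseteq> cbox lo hi" using assms T unfolding box_mesh_def by blast
  then have "interior (cbx T) \<subseteq> interior (cbox lo hi)" by (rule interior_mono)
  then show "obx T \<subseteq> box lo hi" by (simp add: cbx_def obx_def)
next
  fix T T' assume "T \<in> T0" "T' \<in> T0" "T \<noteq> T'"
  then show "obx T \<inter> obx T' = {}" using assms unfolding box_mesh_def by blast
qed

lemma mesh_Suc: "mesh T0 (Suc k) = refine (mesh T0 k)"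
  by (simp add: mesh_def)

lemma boxes_in_mesh: "box_mesh lo hi T0 \<Longrightarrow> boxes_in lo hi (mesh T0 k)"
  by (induction k) (simp_all add: mesh_def boxes_in_box_mesh boxes_in_refine)

section \<open>The two-level hierarchy\<close>

locale nedelec_hierarchy =
  fixes \<alpha> :: real and lo hi :: pt and T0 :: "bx set"
  assumes alpha_pos: "0 < \<alpha>" and box_mesh: "box_mesh lo hi T0"
begin

abbreviation st :: setting where "st \<equiv> (\<alpha>, lo, hi, T0)"

lemma boxes_in_mesh_k: "boxes_in lo hi (mesh T0 k)"
  by (rule boxes_in_mesh[OF box_mesh])

lemma pos_def_form_level: "pos_def_form (piecewise_ned (mesh T0 k)) (aform \<alpha> lo hi)"
  using pos_def_form_aform alpha_pos boxes_in_mesh_k by simp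

lemma ak_eq: "ak st = aform \<alpha> lo hi"
  by (simp add: ak_def)

lemma Nk_eq: "Nk st k = ned lo hi (mesh T0 k)"
  by (simp add: Nk_def)

lemma subspace_Nk: "subspace (Nk st k)"
  unfolding Nk_eq by (rule subspace_ned[OF boxes_in_mesh_k])

lemma Nk_subset: "Nk st k \<subseteq> piecewise_ned (mesh T0 k)"
  unfolding Nk_eq by (rule ned_subset_piecewise_ned)

lemma subspace_NT: "subspace (NT st k T)"
proof -
  have "NT st k T = {v \<in> Nk st k. \<forall>x\<in>box lo hi - cbx T. v x = 0}"
    by (simp add: NT_def)
  then show ?thesis
    using subspace_linear_constraints[OF subspace_Nk, where I = "box lo hi - cbx T" and f = "\<lambda>x v. v x"]
    by simp
qed

lemma NT_subset: "NT st k T \<subseteq> Nk st k"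
  by (auto simp: NT_def)

lemma subspace_dof_constraints:
  assumes "E \<subseteq> faces (mesh T0 k) 1"
  shows "subspace {v \<in> Nk st k. \<forall>e\<in>E. dof (mesh T0 k) v e = 0}"
proof (rule subspace_linear_constraints[OF subspace_Nk])
  fix e x y assume "e \<in> E" "x \<in> Nk st k" "y \<in> Nk st k"
  then show "dof (mesh T0 k) (x + y) e = dof (mesh T0 k) x e + dof (mesh T0 k) y e"
    using assms Nk_subset dof_linear(1)[OF boxes_in_mesh_k] by blast
next
  fix e c x assume "e \<in> E" "x \<in> Nk st k"
  then have "dof (mesh T0 k) (c *\<^sub>R x) e = c * dof (mesh T0 k) x e"
    using assms Nk_subset dof_linear(2)[OF boxes_in_mesh_k] by blast
  then show "dof (mesh T0 k) (c *\<^sub>R x) e = c *\<^sub>R dof (mesh T0 k) x e" by simp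
qed

lemma sums_of_NT_subset:
  "{(\<lambda>x. \<Sum>T\<in>A. wT T x) | wT. \<forall>T\<in>A. wT T \<in> NT st k T} \<subseteq> piecewise_ned (mesh T0 k)"
proof
  fix w assume "w \<in> {(\<lambda>x. \<Sum>T\<in>A. wT T x) | wT. \<forall>T\<in>A. wT T \<in> NT st k T}"
  then obtain wT where w: "w = (\<lambda>x. \<Sum>T\<in>A. wT T x)" and wT: "\<forall>T\<in>A. wT T \<in> NT st k T"
    by blast
  have "w = (\<Sum>T\<in>A. wT T)" by (simp add: w fun_eq_iff)
  also have "\<dots> \<in> piecewise_ned (mesh T0 k)"
    using wT NT_subset Nk_subset by (intro subspace_sum[OF subspace_piecewise_ned]) blast
  finally show "w \<in> piecewise_ned (mesh T0 k)" .
qed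

lemma subspace_patch_space: "subspace (patch_space st k X)"
proof -
  interpret F: pos_def_form "piecewise_ned (mesh T0 k)" "aform \<alpha> lo hi"
    by (rule pos_def_form_level)
  define E where "E = int_edges lo hi (mesh T0 k) - allowed st k X"
  define W where "W = {(\<lambda>x. \<Sum>T\<in>elems_cont st k X. wT T x) | wT.
    \<forall>T\<in>elems_cont st k X. wT T \<in> NT st k T}"
  have "E \<subseteq> faces (mesh T0 k) 1" unfolding E_def int_edges_def by blast
  then have "subspace {v \<in> {v \<in> Nk st k. \<forall>e\<in>E. dof (mesh T0 k) v e = 0}. \<forall>w\<in>W. aform \<alpha> lo hi v w = 0}"
    using subspace_dof_constraints Nk_subset[of k] sums_of_NT_subset unfolding W_def
    by (intro F.subspace_orthogonal) auto
  moreover have "patch_space st k X = {v \<in> {v \<in> Nk st k. \<forall>e\<in>E. dof (mesh T0 k) v e = 0}. \<forall>w\<in>W. aform \<alpha> lo hi v w = 0}"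
    by (auto simp: patch_space_def ak_eq E_def W_def)
  ultimately show ?thesis by simp
qed

lemma patch_space_subset: "patch_space st k X \<subseteq> Nk st k"
  by (auto simp: patch_space_def)

lemma subspace_NP: "subspace (NP var st k P)"
  by (cases var) (simp_all add: NP_def NE_def NV_def subspace_patch_space)

lemma NP_subset: "NP var st k P \<subseteq> Nk st k"
  by (cases var) (simp_all add: NP_def NE_def NV_def patch_space_subset)

lemma mesh_pred: "1 \<le> k \<Longrightarrow> mesh T0 k = refine (mesh T0 (k - 1))"
  using mesh_Suc[of T0 "k - 1"] by simp

lemma Inj_eq: "Inj st k u = (\<lambda>x. if x \<in> \<Union>(obx ` mesh T0 k) then u x else 0)"
  by (simp add: Inj_def)

lemma Inj_add: "Inj st k (u + w) = Inj st k u + Inj st k w"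
  by (simp add: Inj_eq fun_eq_iff)

lemma Inj_scaleR: "Inj st k (c *\<^sub>R u) = c *\<^sub>R Inj st k u"
  by (simp add: Inj_eq fun_eq_iff)

lemma Inj_piecewise_ned:
  assumes k: "1 \<le> k" and u: "u \<in> piecewise_ned (mesh T0 (k - 1))"
  shows "Inj st k u \<in> piecewise_ned (mesh T0 k)"
  unfolding piecewise_ned_def
proof (intro CollectI conjI ballI allI impI)
  fix T' assume "T' \<in> mesh T0 k"
  then obtain T s where T: "T \<in> mesh T0 (k - 1)" "T' = child T s"
    unfolding mesh_pred[OF k] mem_refine by blast
  obtain p where p: "p \<in> ned_polys" "\<forall>x\<in>obx T. u x = p x"
    using u T(1) unfolding piecewise_ned_def by blast
  have "Inj st k u x = p x" if x: "x \<in> obx T'" for x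
  proof -
    have "x \<in> \<Union>(obx ` mesh T0 k)" using x \<open>T' \<in> mesh T0 k\<close> by blast
    moreover have "x \<in> obx T" using x T(2) obx_child_subset by blast
    ultimately show ?thesis using p(2) by (simp add: Inj_eq)
  qed
  then show "\<exists>p\<in>ned_polys. \<forall>x\<in>obx T'. Inj st k u x = p x" using p(1) by blast
qed (simp add: Inj_eq)

lemma Inj_off_skeleton:
  assumes k: "1 \<le> k" and u: "u \<in> piecewise_ned (mesh T0 (k - 1))"
    and x: "x \<notin> skeleton (mesh T0 k)"
  shows "Inj st k u x = u x" "curl (Inj st k u) x = curl u x"
proof -
  have "Inj st k u x = u x \<and> curl (Inj st k u) x = curl u x"
  proof (cases "\<exists>T\<in>mesh T0 k. x \<in> obx T")
    case True
    then obtain T where T: "T \<in> mesh T0 k" "x \<in> obx T" by blast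
    obtain e where e: "0 < e" "ball x e \<subseteq> obx T" using open_obx T(2) by (rule openE)
    then have "\<forall>y\<in>ball x e. Inj st k u y = u y" using T(1) by (auto simp: Inj_eq)
    then show ?thesis using curl_cong[OF e(1)] e(1) by simp
  next
    case False
    note nondeg = boxes_inD(2)[OF boxes_in_mesh_k]
    have "x \<notin> (\<Union>T\<in>mesh T0 k. cbx T)" using False x unfolding skeleton_def by blast
    moreover have "(\<Union>T\<in>mesh T0 k. cbx T) = (\<Union>T\<in>mesh T0 (k - 1). cbx T)"
      unfolding mesh_pred[OF k] using nondeg by (rule cbx_refine)
    ultimately show ?thesis
      using piecewise_ned_outside[OF boxes_inD(1)[OF boxes_in_mesh_k] Inj_piecewise_ned[OF k u]]
        piecewise_ned_outside[OF boxes_inD(1)[OF boxes_in_mesh_k] u]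
      by simp
  qed
  then show "Inj st k u x = u x" "curl (Inj st k u) x = curl u x" by auto
qed

lemma aform_Inj:
  assumes k: "1 \<le> k" and u: "u \<in> piecewise_ned (mesh T0 (k - 1))"
    and w: "w \<in> piecewise_ned (mesh T0 (k - 1))"
  shows "aform \<alpha> lo hi (Inj st k u) (Inj st k w) = aform \<alpha> lo hi u w"
proof -
  have neg: "negligible (skeleton (mesh T0 k))"
    by (rule negligible_skeleton[OF boxes_inD(1)[OF boxes_in_mesh_k]])
  have "integral (box lo hi) (\<lambda>x. curl (Inj st k u) x \<bullet> curl (Inj st k w) x)
      = integral (box lo hi) (\<lambda>x. curl u x \<bullet> curl w x)"
    by (rule integral_spike[OF neg]) (simp add: Inj_off_skeleton[OF k u] Inj_off_skeleton[OF k w])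
  moreover have "integral (box lo hi) (\<lambda>x. Inj st k u x \<bullet> Inj st k w x)
      = integral (box lo hi) (\<lambda>x. u x \<bullet> w x)"
    by (rule integral_spike[OF neg]) (simp add: Inj_off_skeleton[OF k u] Inj_off_skeleton[OF k w])
  ultimately show ?thesis unfolding aform_def by simp
qed

lemma Ritz_spec:
  assumes k: "1 \<le> k" and v: "v \<in> Nk st k"
  shows "Ritz st k v \<in> Nk st (k - 1)"
    "\<And>v'. v' \<in> Nk st (k - 1) \<Longrightarrow> aform \<alpha> lo hi (Ritz st k v) v' = aform \<alpha> lo hi v (Inj st k v')"
proof -
  interpret F: pos_def_form "piecewise_ned (mesh T0 k)" "aform \<alpha> lo hi"
    by (rule pos_def_form_level)
  have Inj_in: "Inj st k x \<in> piecewise_ned (mesh T0 k)" if "x \<in> Nk st (k - 1)" for x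
    using Inj_piecewise_ned[OF k] Nk_subset that by blast
  have "\<exists>!u. u \<in> Nk st (k - 1) \<and> (\<forall>s\<in>Nk st (k - 1). aform \<alpha> lo hi u s = aform \<alpha> lo hi v (Inj st k s))"
  proof (rule aform_riesz[OF _ boxes_in_mesh_k subspace_Nk Nk_subset])
    show "0 \<le> \<alpha>" using alpha_pos by simp
    show "aform \<alpha> lo hi v (Inj st k (x + y)) = aform \<alpha> lo hi v (Inj st k x) + aform \<alpha> lo hi v (Inj st k y)"
      if "x \<in> Nk st (k - 1)" "y \<in> Nk st (k - 1)" for x y
      unfolding Inj_add using Inj_in that v Nk_subset by (intro F.add_right) auto
    show "aform \<alpha> lo hi v (Inj st k (c *\<^sub>R x)) = c * aform \<alpha> lo hi v (Inj st k x)"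
      if "x \<in> Nk st (k - 1)" for c x
      unfolding Inj_scaleR using Inj_in that v Nk_subset by (intro F.scale_right) auto
  qed
  then have "Ritz st k v \<in> Nk st (k - 1) \<and>
      (\<forall>s\<in>Nk st (k - 1). aform \<alpha> lo hi (Ritz st k v) s = aform \<alpha> lo hi v (Inj st k s))"
    unfolding Ritz_def ak_eq by (rule theI')
  then show "Ritz st k v \<in> Nk st (k - 1)"
    "\<And>v'. v' \<in> Nk st (k - 1) \<Longrightarrow> aform \<alpha> lo hi (Ritz st k v) v' = aform \<alpha> lo hi v (Inj st k v')"
    by auto
qed

lemma local_solve_spec:
  assumes S: "subspace S" "S \<subseteq> Nk st k" and v: "v \<in> Nk st k"
  shows "AinvS st S (Jt S (Aop st k v)) \<in> S"
    "\<And>s. s \<in> S \<Longrightarrow> aform \<alpha> lo hi (AinvS st S (Jt S (Aop st k v))) s = aform \<alpha> lo hi v s"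
proof -
  interpret F: pos_def_form "piecewise_ned (mesh T0 k)" "aform \<alpha> lo hi"
    by (rule pos_def_form_level)
  have SP: "S \<subseteq> piecewise_ned (mesh T0 k)" and vP: "v \<in> piecewise_ned (mesh T0 k)"
    using S(2) v Nk_subset by auto
  have ex: "\<exists>!u. u \<in> S \<and> (\<forall>s\<in>S. aform \<alpha> lo hi u s = aform \<alpha> lo hi v s)"
  proof (rule aform_riesz[OF _ boxes_in_mesh_k S(1) SP])
    show "0 \<le> \<alpha>" using alpha_pos by simp
    show "aform \<alpha> lo hi v (x + y) = aform \<alpha> lo hi v x + aform \<alpha> lo hi v y" if "x \<in> S" "y \<in> S" for x y
      using that SP vP by (intro F.add_right) auto
    show "aform \<alpha> lo hi v (c *\<^sub>R x) = c * aform \<alpha> lo hi v x" if "x \<in> S" for c x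
      using that SP vP by (intro F.scale_right) auto
  qed
  have eq: "(\<lambda>u. u \<in> S \<and> (\<forall>s\<in>S. ak st u s = Jt S (Aop st k v) s))
      = (\<lambda>u. u \<in> S \<and> (\<forall>s\<in>S. aform \<alpha> lo hi u s = aform \<alpha> lo hi v s))"
    using S(2) by (auto simp: Jt_def Aop_def ak_eq fun_eq_iff)
  have "AinvS st S (Jt S (Aop st k v)) \<in> S \<and>
      (\<forall>s\<in>S. aform \<alpha> lo hi (AinvS st S (Jt S (Aop st k v))) s = aform \<alpha> lo hi v s)"
    unfolding AinvS_def eq by (rule theI'[OF ex])
  then show "AinvS st S (Jt S (Aop st k v)) \<in> S"
    "\<And>s. s \<in> S \<Longrightarrow> aform \<alpha> lo hi (AinvS st S (Jt S (Aop st k v))) s = aform \<alpha> lo hi v s"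
    by auto
qed

end

context nedelec_hierarchy
begin

lemma finite_patches: "finite (patches var st k)"
proof -
  have "finite (faces (mesh T0 (k - 1)) j)" for j
    using finite_faces boxes_inD(1)[OF boxes_in_mesh_k] by blast
  then show ?thesis
    by (cases var) (auto simp: patches_def int_edges_def int_vertices_def)
qed

definition local_index :: "variant \<Rightarrow> nat \<Rightarrow> (bx + bx) set" where
  "local_index var k = mesh T0 (k - 1) <+> patches var st k"

definition local_space :: "variant \<Rightarrow> nat \<Rightarrow> bx + bx \<Rightarrow> (pt \<Rightarrow> real^3) set" where
  "local_space var k = case_sum (NT st k) (NP var st k)"

definition local_projection :: "variant \<Rightarrow> nat \<Rightarrow> (pt \<Rightarrow> real^3) \<Rightarrow> bx + bx \<Rightarrow> pt \<Rightarrow> real^3" where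
  "local_projection var k v i = AinvS st (local_space var k i) (Jt (local_space var k i) (Aop st k v))"

lemma sum_local_index:
  "(\<Sum>i\<in>local_index var k. f i) = (\<Sum>T\<in>mesh T0 (k - 1). f (Inl T)) + (\<Sum>P\<in>patches var st k. f (Inr P))"
  unfolding local_index_def
  by (simp add: sum.Plus boxes_inD(1)[OF boxes_in_mesh_k] finite_patches comp_def)

lemma subspace_local_space: "subspace (local_space var k i)"
  by (cases i) (simp_all add: local_space_def subspace_NT subspace_NP)

lemma local_space_subset: "local_space var k i \<subseteq> Nk st k"
  by (cases i) (simp_all add: local_space_def NT_subset NP_subset)

lemma local_projection_spec:
  assumes "v \<in> Nk st k"
  shows "local_projection var k v i \<in> local_space var k i"
    "\<And>s. s \<in> local_space var k i \<Longrightarrow> aform \<alpha> lo hi (local_projection var k v i) s = aform \<alpha> lo hi v s"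
  using local_solve_spec[OF subspace_local_space local_space_subset assms] unfolding local_projection_def by blast+

lemma Id_minus_R_eq: "v - Rk var \<eta> st k v = \<eta> *\<^sub>R (\<Sum>i\<in>local_index var k. local_projection var k v i)"
  by (simp add: Rk_def Minv_def fun_eq_iff sum_local_index local_projection_def local_space_def)

lemma stable_decomposition:
  assumes sd: "stable_decomp var st C" and k: "1 \<le> k" and v: "v \<in> Nk st k"
  obtains w where "\<And>i. i \<in> local_index var k \<Longrightarrow> w i \<in> local_space var k i"
    "v - Inj st k (Ritz st k v) = (\<Sum>i\<in>local_index var k. w i)"
    "(\<Sum>i\<in>local_index var k. aform \<alpha> lo hi (w i) (w i))
       \<le> C * aform \<alpha> lo hi (v - Inj st k (Ritz st k v)) (v - Inj st k (Ritz st k v))"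
proof -
  have mem: "(\<lambda>x. v x - Inj st k (Ritz st k v) x) \<in> {(\<lambda>x. v x - Inj st k (Ritz st k v) x) | v. v \<in> Nk st k}"
    using v by blast
  have "\<forall>k\<ge>1. \<forall>w \<in> {(\<lambda>x. v x - Inj st k (Ritz st k v) x) | v. v \<in> Nk st k}.
      \<exists>wT wP. (\<forall>T\<in>mesh T0 (k - 1). wT T \<in> NT st k T) \<and> (\<forall>P\<in>patches var st k. wP P \<in> NP var st k P) \<and>
        w = (\<lambda>x. (\<Sum>T\<in>mesh T0 (k - 1). wT T x) + (\<Sum>P\<in>patches var st k. wP P x)) \<and>
        (\<Sum>T\<in>mesh T0 (k - 1). aform \<alpha> lo hi (wT T) (wT T)) + (\<Sum>P\<in>patches var st k. aform \<alpha> lo hi (wP P) (wP P))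
          \<le> C * aform \<alpha> lo hi w w"
    using sd unfolding stable_decomp_def ak_eq by simp
  from this[rule_format, OF k mem] obtain wT wP where
    w: "\<forall>T\<in>mesh T0 (k - 1). wT T \<in> NT st k T" "\<forall>P\<in>patches var st k. wP P \<in> NP var st k P"
    "(\<lambda>x. v x - Inj st k (Ritz st k v) x) = (\<lambda>x. (\<Sum>T\<in>mesh T0 (k - 1). wT T x) + (\<Sum>P\<in>patches var st k. wP P x))"
    "(\<Sum>T\<in>mesh T0 (k - 1). aform \<alpha> lo hi (wT T) (wT T)) + (\<Sum>P\<in>patches var st k. aform \<alpha> lo hi (wP P) (wP P))
       \<le> C * aform \<alpha> lo hi (\<lambda>x. v x - Inj st k (Ritz st k v) x) (\<lambda>x. v x - Inj st k (Ritz st k v) x)"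
    by blast
  have eq: "(\<lambda>x. v x - Inj st k (Ritz st k v) x) = v - Inj st k (Ritz st k v)"
    "(\<lambda>x. (\<Sum>T\<in>mesh T0 (k - 1). wT T x) + (\<Sum>P\<in>patches var st k. wP P x))
      = (\<Sum>i\<in>local_index var k. case_sum wT wP i)"
    by (auto simp: sum_local_index)
  show ?thesis
  proof (rule that[of "case_sum wT wP"])
    show "case_sum wT wP i \<in> local_space var k i" if "i \<in> local_index var k" for i
      using that w(1,2) by (auto simp: local_index_def local_space_def)
    show "v - Inj st k (Ritz st k v) = (\<Sum>i\<in>local_index var k. case_sum wT wP i)"
      using w(3) unfolding eq .
    show "(\<Sum>i\<in>local_index var k. aform \<alpha> lo hi (case_sum wT wP i) (case_sum wT wP i))
       \<le> C * aform \<alpha> lo hi (v - Inj st k (Ritz st k v)) (v - Inj st k (Ritz st k v))"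
      using w(4) unfolding eq by (simp add: sum_local_index)
  qed
qed

lemma galerkin_orthogonality:
  assumes k: "1 \<le> k" and v: "v \<in> Nk st k"
  defines "d \<equiv> v - Inj st k (Ritz st k v)"
  shows "aform \<alpha> lo hi d d = aform \<alpha> lo hi d v"
proof -
  interpret F: pos_def_form "piecewise_ned (mesh T0 k)" "aform \<alpha> lo hi"
    by (rule pos_def_form_level)
  define R where "R = Ritz st k v"
  have R: "R \<in> piecewise_ned (mesh T0 (k - 1))" and IR: "Inj st k R \<in> piecewise_ned (mesh T0 k)"
    using Ritz_spec(1)[OF k v] Nk_subset Inj_piecewise_ned[OF k] unfolding R_def by blast+
  have vP: "v \<in> piecewise_ned (mesh T0 k)" using v Nk_subset by blast
  have dP: "d \<in> piecewise_ned (mesh T0 k)"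
    using vP IR subspace_diff[OF subspace_piecewise_ned] unfolding d_def R_def by blast
  have "aform \<alpha> lo hi (Inj st k R) (Inj st k R) = aform \<alpha> lo hi v (Inj st k R)"
    using aform_Inj[OF k R R] Ritz_spec[OF k v] unfolding R_def by simp
  then have "aform \<alpha> lo hi d (Inj st k R) = 0"
    using F.diff_left[OF vP IR IR] unfolding d_def R_def by simp
  then show ?thesis
    using F.diff_right[OF vP IR dP] unfolding d_def R_def by simp
qed

lemma two_level_bound:
  assumes k: "1 \<le> k" and v: "v \<in> Nk st k" and \<eta>: "0 < \<eta>"
    and sd: "stable_decomp var st C" and C: "0 \<le> C"
  defines "d \<equiv> v - Inj st k (Ritz st k v)"
  shows "aform \<alpha> lo hi d d \<le> C / \<eta> * aform \<alpha> lo hi (v - Rk var \<eta> st k v) v"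
proof -
  interpret F: pos_def_form "piecewise_ned (mesh T0 k)" "aform \<alpha> lo hi"
    by (rule pos_def_form_level)
  have vP: "v \<in> piecewise_ned (mesh T0 k)" using v Nk_subset by blast
  have space: "local_space var k i \<subseteq> piecewise_ned (mesh T0 k)" for i
    using local_space_subset Nk_subset by blast
  note p = local_projection_spec[OF v]
  obtain w where "\<And>i. i \<in> local_index var k \<Longrightarrow> w i \<in> local_space var k i"
    "d = (\<Sum>i\<in>local_index var k. w i)"
    "(\<Sum>i\<in>local_index var k. aform \<alpha> lo hi (w i) (w i)) \<le> C * aform \<alpha> lo hi d d"
    using stable_decomposition[OF sd k v] unfolding d_def by blast
  then have "aform \<alpha> lo hi d d \<le> C * (\<Sum>i\<in>local_index var k. aform \<alpha> lo hi (local_projection var k v i) v)"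
    using galerkin_orthogonality[OF k v] space p C vP unfolding d_def
    by (intro F.additive_schwarz_bound[where S = "local_space var k"]) auto
  also have "(\<Sum>i\<in>local_index var k. aform \<alpha> lo hi (local_projection var k v i) v)
      = aform \<alpha> lo hi (v - Rk var \<eta> st k v) v / \<eta>"
  proof -
    have pP: "local_projection var k v i \<in> piecewise_ned (mesh T0 k)" for i using p(1) space by blast
    then have "(\<Sum>i\<in>local_index var k. local_projection var k v i) \<in> piecewise_ned (mesh T0 k)"
      by (intro subspace_sum[OF subspace_piecewise_ned])
    then have "aform \<alpha> lo hi (v - Rk var \<eta> st k v) v
        = \<eta> * (\<Sum>i\<in>local_index var k. aform \<alpha> lo hi (local_projection var k v i) v)"
      unfolding Id_minus_R_eq using pP vP by (simp add: F.scale_left F.sum_left)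
    then show ?thesis using \<eta> by simp
  qed
  finally show ?thesis by simp
qed

end

section \<open>A fine field that is not coarse\<close>

definition box_half :: "bx \<Rightarrow> 3 \<Rightarrow> real" where "box_half T i = (snd T $ i - fst T $ i) / 2"
definition box_mid :: "bx \<Rightarrow> 3 \<Rightarrow> real" where "box_mid T i = (fst T $ i + snd T $ i) / 2"

text \<open>hat T i is the hat function on the i-th side interval of T, peaking at its midpoint;
  hat_piece T s i is its affine piece on the half of that interval selected by s i.\<close>

definition hat_slope :: "bx \<Rightarrow> (3 \<Rightarrow> bool) \<Rightarrow> 3 \<Rightarrow> real" where
  "hat_slope T s i = (if s i then - 1 / box_half T i else 1 / box_half T i)"
definition hat_offset :: "bx \<Rightarrow> (3 \<Rightarrow> bool) \<Rightarrow> 3 \<Rightarrow> real" where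
  "hat_offset T s i = (if s i then snd T $ i / box_half T i else - fst T $ i / box_half T i)"
definition hat_piece :: "bx \<Rightarrow> (3 \<Rightarrow> bool) \<Rightarrow> 3 \<Rightarrow> real \<Rightarrow> real" where
  "hat_piece T s i t = hat_offset T s i + hat_slope T s i * t"

definition hat :: "bx \<Rightarrow> 3 \<Rightarrow> real \<Rightarrow> real" where
  "hat T i t = max 0 (1 - \<bar>t - box_mid T i\<bar> / box_half T i)"
definition bubble :: "bx \<Rightarrow> pt \<Rightarrow> real" where
  "bubble T x = hat T 1 (x$1) * hat T 2 (x$2) * hat T 3 (x$3)"

definition bubble_piece :: "bx \<Rightarrow> (3 \<Rightarrow> bool) \<Rightarrow> pt \<Rightarrow> real" where
  "bubble_piece T s x = hat_piece T s 1 (x$1) * hat_piece T s 2 (x$2) * hat_piece T s 3 (x$3)"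
definition bubble_grad :: "bx \<Rightarrow> (3 \<Rightarrow> bool) \<Rightarrow> pt \<Rightarrow> real^3" where
  "bubble_grad T s x = vector [hat_slope T s 1 * hat_piece T s 2 (x$2) * hat_piece T s 3 (x$3),
                                hat_slope T s 2 * hat_piece T s 3 (x$3) * hat_piece T s 1 (x$1),
                                hat_slope T s 3 * hat_piece T s 1 (x$1) * hat_piece T s 2 (x$2)]"

lemma bubble_grad_ned_poly: "bubble_grad T s \<in> ned_polys"
proof -
  define h g where "h = hat_slope T s" and "g = hat_offset T s"
  let ?a = "vector [h 1 * g 2 * g 3, h 1 * h 2 * g 3, h 1 * g 2 * h 3, h 1 * h 2 * h 3] :: real^4"
  let ?b = "vector [h 2 * g 3 * g 1, h 2 * h 3 * g 1, h 2 * g 3 * h 1, h 2 * h 3 * h 1] :: real^4"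
  let ?c = "vector [h 3 * g 1 * g 2, h 3 * h 1 * g 2, h 3 * g 1 * h 2, h 3 * h 1 * h 2] :: real^4"
  have [simp]: "(vector [a1, a2, a3, a4] :: real^4) $ 1 = a1" "(vector [a1, a2, a3, a4] :: real^4) $ 2 = a2"
    "(vector [a1, a2, a3, a4] :: real^4) $ 3 = a3" "(vector [a1, a2, a3, a4] :: real^4) $ 4 = a4"
    for a1 a2 a3 a4 :: real
    by (simp_all add: vector_def)
  have "bubble_grad T s = ned_poly ?a ?b ?c"
    by (simp add: fun_eq_iff vec_eq_iff forall_3 bubble_grad_def ned_poly_component hat_piece_def
        h_def g_def algebra_simps)
  then show ?thesis unfolding ned_polys_def by blast
qed

lemma bubble_piece_along_axis:
  "bubble_piece T s (x + t *\<^sub>R axis j 1) = bubble_piece T s x + t * bubble_grad T s x $ j"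
  by (cases j rule: num3_cases) (simp_all add: bubble_piece_def bubble_grad_def hat_piece_def axis_component algebra_simps)

lemma box_half_pos: "nondeg T \<Longrightarrow> 0 < box_half T i"
  unfolding nondeg_def box_half_def by simp

lemma hat_lower_half:
  assumes h: "0 < box_half T i" and y: "fst T $ i \<le> y" "y \<le> box_mid T i"
  shows "hat T i y = hat_piece T (\<lambda>_. False) i y"
proof -
  have "\<bar>y - box_mid T i\<bar> = box_mid T i - y" using y by simp
  moreover have "box_mid T i - box_half T i = fst T $ i" by (simp add: box_mid_def box_half_def field_simps)
  ultimately have "1 - \<bar>y - box_mid T i\<bar> / box_half T i = (y - fst T $ i) / box_half T i"
    using h by (simp add: field_simps)
  moreover have "0 \<le> (y - fst T $ i) / box_half T i" using h y by simp
  ultimately show ?thesis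
    unfolding hat_def hat_piece_def hat_offset_def hat_slope_def using h by (simp add: field_simps)
qed

lemma hat_upper_half:
  assumes h: "0 < box_half T i" and y: "box_mid T i \<le> y" "y \<le> snd T $ i"
  shows "hat T i y = hat_piece T (\<lambda>_. True) i y"
proof -
  have "\<bar>y - box_mid T i\<bar> = y - box_mid T i" using y by simp
  moreover have "box_mid T i + box_half T i = snd T $ i" by (simp add: box_mid_def box_half_def field_simps)
  ultimately have "1 - \<bar>y - box_mid T i\<bar> / box_half T i = (snd T $ i - y) / box_half T i"
    using h by (simp add: field_simps)
  moreover have "0 \<le> (snd T $ i - y) / box_half T i" using h y by simp
  ultimately show ?thesis
    unfolding hat_def hat_piece_def hat_offset_def hat_slope_def using h by (simp add: field_simps)
qed

lemma hat_on_child: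
  assumes T: "nondeg T" and y: "y \<in> cbx (child T s)"
  shows "hat T i (y $ i) = hat_piece T s i (y $ i)"
proof -
  have h: "0 < box_half T i" by (rule box_half_pos[OF T])
  have yi: "fst (child T s) $ i \<le> y $ i" "y $ i \<le> snd (child T s) $ i"
    using y unfolding mem_cbx by auto
  have piece: "hat_piece T s i = hat_piece T (\<lambda>_. s i) i"
    by (simp add: hat_piece_def hat_offset_def hat_slope_def fun_eq_iff)
  show ?thesis
  proof (cases "s i")
    case True
    then show ?thesis
      using hat_upper_half[OF h] yi piece unfolding child_component box_mid_def by simp
  next
    case False
    then show ?thesis
      using hat_lower_half[OF h] yi piece unfolding child_component box_mid_def by simp
  qed
qed

lemma bubble_on_child: "nondeg T \<Longrightarrow> y \<in> cbx (child T s) \<Longrightarrow> bubble T y = bubble_piece T s y"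
  unfolding bubble_def bubble_piece_def using hat_on_child by simp

lemma bubble_outside:
  assumes T: "nondeg T" and y: "y \<notin> obx T"
  shows "bubble T y = 0"
proof -
  obtain i where i: "\<not> (fst T $ i < y $ i \<and> y $ i < snd T $ i)" using y unfolding mem_obx by blast
  have h: "0 < box_half T i" by (rule box_half_pos[OF T])
  then have "box_half T i \<le> \<bar>y $ i - box_mid T i\<bar>"
    using i by (auto simp: abs_if box_half_def box_mid_def field_simps)
  then have "hat T i (y $ i) = 0" using h unfolding hat_def by (simp add: field_simps)
  then show ?thesis unfolding bubble_def by (cases i rule: num3_cases) simp_all
qed

lemma face_tangent_directions:
  assumes "fdim F = 2" "fst F $ i = snd F $ i" "j \<noteq> i" "\<And>l. fst F $ l \<le> snd F $ l"
  shows "fst F $ j < snd F $ j"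
proof -
  have "{l. fst F $ l < snd F $ l} \<subseteq> UNIV - {i}" using assms(2) by auto
  moreover have "card {l. fst F $ l < snd F $ l} = 2" using assms(1) unfolding fdim_def .
  moreover have "card (UNIV - {i} :: 3 set) = 2" by (simp add: card_Diff_singleton)
  ultimately have "{l. fst F $ l < snd F $ l} = UNIV - {i}"
    by (intro card_subset_eq) auto
  then show ?thesis using assms(3) by auto
qed

lemma tangential_slope_unique:
  assumes f: "\<And>x t. f (x + t *\<^sub>R axis j 1) = f x + t * df x $ j"
    and g: "\<And>x t. g (x + t *\<^sub>R axis j 1) = g x + t * dg x $ j"
    and F: "fdim F = 2" "fst F $ i = snd F $ i" "j \<noteq> i" "\<And>l. fst F $ l \<le> snd F $ l"
    and x: "x \<in> cbx F" and eq: "\<And>y. y \<in> cbx F \<Longrightarrow> f y = g y"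
  shows "df x $ j = dg x $ j"
proof -
  have lt: "fst F $ j < snd F $ j" by (rule face_tangent_directions[OF F])
  define \<delta> where "\<delta> = (if x $ j < snd F $ j then snd F $ j - x $ j else fst F $ j - x $ j)"
  have xj: "fst F $ j \<le> x $ j" "x $ j \<le> snd F $ j" using x unfolding mem_cbx by auto
  have "\<delta> \<noteq> 0" unfolding \<delta>_def using lt xj by auto
  moreover have "x + \<delta> *\<^sub>R axis j 1 \<in> cbx F"
    using x lt xj unfolding mem_cbx \<delta>_def by (auto simp: axis_component)
  then have "f x + \<delta> * df x $ j = g x + \<delta> * dg x $ j"
    using f g eq by metis
  moreover have "f x = g x" using eq x by blast
  ultimately show ?thesis by simp
qed

definition child_center :: "bx \<Rightarrow> (3 \<Rightarrow> bool) \<Rightarrow> pt" where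
  "child_center T s = (\<chi> i. if s i then snd T $ i - box_half T i / 2 else fst T $ i + box_half T i / 2)"

lemma child_center_in_child:
  assumes "nondeg T"
  shows "child_center T s \<in> obx (child T s)"
  unfolding mem_obx
proof
  fix i
  have "fst T $ i < snd T $ i" using assms unfolding nondeg_def by blast
  then show "fst (child T s) $ i < child_center T s $ i \<and> child_center T s $ i < snd (child T s) $ i"
    by (simp add: child_center_def child_component box_half_def field_simps)
qed

lemma bubble_grad_at_child_center:
  assumes "nondeg T"
  shows "bubble_grad T s (child_center T s) $ 1 = hat_slope T s 1 / 4"
proof -
  have half: "hat_piece T s i (child_center T s $ i) = 1 / 2" for i
    using box_half_pos[OF assms, of i]
    by (simp add: child_center_def hat_piece_def hat_offset_def hat_slope_def field_simps)
  show ?thesis by (simp add: bubble_grad_def half)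
qed

text \<open>The gradient of the bubble of T, taken piecewise on the children of T; like every element
  of ned it vanishes off the open fine elements.\<close>

definition bubble_field :: "bx set \<Rightarrow> bx \<Rightarrow> pt \<Rightarrow> real^3" where
  "bubble_field M T x =
     (if x \<in> \<Union>(obx ` M) \<and> x \<in> obx T then bubble_grad T (\<lambda>i. box_mid T i \<le> x $ i) x else 0)"

context nedelec_hierarchy
begin

lemma mesh_one: "mesh T0 1 = refine T0"
  by (simp add: mesh_def)

lemma nondeg_refine_T0: "T1 \<in> refine T0 \<Longrightarrow> nondeg T1"
  using boxes_inD(2)[OF boxes_in_mesh_k[of 1]] unfolding mesh_one by blast

lemma boxes_in_T0: "boxes_in lo hi T0"
  by (rule boxes_in_box_mesh[OF box_mesh])

lemma bubble_field_on_child: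
  assumes T: "T \<in> T0" and x: "x \<in> obx (child T s)"
  shows "bubble_field (refine T0) T x = bubble_grad T s x"
proof -
  have "child T s \<in> refine T0" unfolding mem_refine using T by blast
  then have "x \<in> \<Union>(obx ` refine T0)" using x by blast
  moreover have "x \<in> obx T" using x obx_child_subset by blast
  moreover have "(\<lambda>i. box_mid T i \<le> x $ i) = s"
  proof
    fix i
    have "fst (child T s) $ i < x $ i \<and> x $ i < snd (child T s) $ i" using x unfolding mem_obx by blast
    then show "(box_mid T i \<le> x $ i) = s i" unfolding child_component box_mid_def by (cases "s i") auto
  qed
  ultimately show ?thesis unfolding bubble_field_def by simp
qed

lemma non_children_disjoint:
  assumes T: "T \<in> T0" and T1: "T1 \<in> refine T0" and not_child: "\<nexists>s. T1 = child T s"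
  shows "cbx T1 \<inter> obx T = {}"
proof -
  obtain T' s' where T': "T' \<in> T0" "T1 = child T' s'" using T1 unfolding mem_refine by blast
  have nd: "nondeg T'" using boxes_inD(2)[OF boxes_in_T0 T'(1)] .
  have "T' \<noteq> T" using not_child T' by blast
  then have "obx T' \<inter> obx T = {}" using boxes_inD(4)[OF boxes_in_T0 T'(1) T] by blast
  then have "obx T \<inter> closure (obx T') = {}"
    using open_Int_closure_eq_empty[OF open_obx[of T], of "obx T'"] by blast
  moreover have "cbx T1 \<subseteq> closure (obx T')"
    unfolding closure_obx[OF nd] T'(2) by (rule cbx_child_subset[OF nd])
  ultimately show ?thesis by blast
qed

lemma bubble_field_off_children:
  assumes T: "T \<in> T0" and T1: "T1 \<in> refine T0" and not_child: "\<nexists>s. T1 = child T s"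
  shows "\<forall>x\<in>obx T1. bubble_field (refine T0) T x = 0"
proof
  fix x assume "x \<in> obx T1"
  then have "x \<notin> obx T" using non_children_disjoint[OF assms] obx_subset_cbx[of T1] by blast
  then show "bubble_field (refine T0) T x = 0" by (simp add: bubble_field_def)
qed

lemma bubble_field_piecewise_ned:
  assumes T: "T \<in> T0"
  shows "bubble_field (refine T0) T \<in> piecewise_ned (refine T0)"
  unfolding piecewise_ned_def
proof (intro CollectI conjI ballI allI impI)
  fix T1 assume T1: "T1 \<in> refine T0"
  show "\<exists>p\<in>ned_polys. \<forall>x\<in>obx T1. bubble_field (refine T0) T x = p x"
  proof (cases "\<exists>s. T1 = child T s")
    case True
    then obtain s where "T1 = child T s" by blast
    then show ?thesis using bubble_field_on_child[OF T] bubble_grad_ned_poly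
      by (intro bexI[of _ "bubble_grad T s"]) auto
  next
    case False
    then show ?thesis
      using bubble_field_off_children[OF T T1 False] subspace_0[OF subspace_ned_polys]
      by (intro bexI[of _ 0]) auto
  qed
qed (simp add: bubble_field_def)

text \<open>Through these local potentials the bubble field inherits tangential continuity from the
  continuity of the bubble.\<close>

lemma bubble_field_local_potential:
  assumes T: "T \<in> T0" and T1: "T1 \<in> refine T0"
  obtains Q G where "\<And>j x t. Q (x + t *\<^sub>R axis j 1) = Q x + t * G x $ j"
    "\<And>y. y \<in> cbx T1 \<Longrightarrow> Q y = bubble T y \<and> loc (bubble_field (refine T0) T) T1 y = G y"
proof -
  have ndT: "nondeg T" using boxes_inD(2)[OF boxes_in_T0 T] .
  have nd1: "nondeg T1" using nondeg_refine_T0[OF T1] .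
  note loc = loc_spec[OF bubble_field_piecewise_ned[OF T] T1]
  show ?thesis
  proof (cases "\<exists>s. T1 = child T s")
    case True
    then obtain s where s: "T1 = child T s" by blast
    have "\<forall>x\<in>obx T1. loc (bubble_field (refine T0) T) T1 x = bubble_grad T s x"
      using bubble_field_on_child[OF T] s loc(2) by auto
    then have "loc (bubble_field (refine T0) T) T1 y = bubble_grad T s y" if "y \<in> cbx T1" for y
      using ned_polys_eq_on_cbx[OF loc(1) bubble_grad_ned_poly nd1 _ that] by blast
    moreover have "bubble_piece T s y = bubble T y" if "y \<in> cbx T1" for y
      using bubble_on_child[OF ndT] that s by simp
    ultimately show ?thesis
      using that[of "bubble_piece T s" "bubble_grad T s"] bubble_piece_along_axis by blast
  next
    case False
    have "\<forall>x\<in>obx T1. loc (bubble_field (refine T0) T) T1 x = 0 x"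
      using bubble_field_off_children[OF T T1 False] loc(2) by auto
    then have "loc (bubble_field (refine T0) T) T1 y = 0 y" if "y \<in> cbx T1" for y
      using ned_polys_eq_on_cbx[OF loc(1) subspace_0[OF subspace_ned_polys] nd1 _ that] by blast
    moreover have "bubble T y = 0" if "y \<in> cbx T1" for y
      using bubble_outside[OF ndT] non_children_disjoint[OF T T1 False] that by blast
    ultimately show ?thesis
      using that[of "\<lambda>_. 0" "0"] by simp
  qed
qed

lemma bubble_field_tangential_continuity:
  assumes T: "T \<in> T0"
  shows "tangential_continuity (refine T0) (bubble_field (refine T0) T)"
  unfolding tangential_continuity_def
proof (intro ballI allI impI)
  let ?v = "bubble_field (refine T0) T"
  fix T1 T2 F i x j
  assume T1: "T1 \<in> refine T0" and T2: "T2 \<in> refine T0"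
    and F: "is_face T1 F \<and> is_face T2 F \<and> fdim F = 2 \<and> fst F $ i = snd F $ i"
    and x: "x \<in> cbx F" and j: "j \<noteq> i"
  obtain Q1 G1 where Q1: "\<And>j x t. Q1 (x + t *\<^sub>R axis j 1) = Q1 x + t * G1 x $ j"
    "\<And>y. y \<in> cbx T1 \<Longrightarrow> Q1 y = bubble T y \<and> loc ?v T1 y = G1 y"
    using bubble_field_local_potential[OF T T1] by blast
  obtain Q2 G2 where Q2: "\<And>j x t. Q2 (x + t *\<^sub>R axis j 1) = Q2 x + t * G2 x $ j"
    "\<And>y. y \<in> cbx T2 \<Longrightarrow> Q2 y = bubble T y \<and> loc ?v T2 y = G2 y"
    using bubble_field_local_potential[OF T T2] by blast
  have F1: "cbx F \<subseteq> cbx T1" and F2: "cbx F \<subseteq> cbx T2"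
    using cbx_face_subset nondeg_refine_T0 T1 T2 F by blast+
  have "G1 x $ j = G2 x $ j"
  proof (rule tangential_slope_unique[OF Q1(1) Q2(1) _ _ j _ x])
    show "fst F $ l \<le> snd F $ l" for l using is_face_le nondeg_refine_T0 T1 F by blast
    show "Q1 y = Q2 y" if "y \<in> cbx F" for y
    proof -
      have "y \<in> cbx T1" "y \<in> cbx T2" using that F1 F2 by blast+
      then show ?thesis using Q1(2) Q2(2) by simp
    qed
  qed (use F in auto)
  moreover have "x \<in> cbx T1" "x \<in> cbx T2" using F1 F2 x by blast+
  ultimately show "loc ?v T1 x $ j = loc ?v T2 x $ j" using Q1(2) Q2(2) by simp
qed

lemma bubble_field_tangential_boundary_zero:
  assumes T: "T \<in> T0"
  shows "tangential_boundary_zero lo hi (refine T0) (bubble_field (refine T0) T)"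
  unfolding tangential_boundary_zero_def
proof (intro ballI allI impI)
  let ?v = "bubble_field (refine T0) T"
  fix T1 F i x j
  assume T1: "T1 \<in> refine T0"
    and F: "is_face T1 F \<and> fdim F = 2 \<and> fst F $ i = snd F $ i \<and> cbx F \<subseteq> frontier (box lo hi)"
    and x: "x \<in> cbx F" and j: "j \<noteq> i"
  obtain Q1 G1 where Q1: "\<And>j x t. Q1 (x + t *\<^sub>R axis j 1) = Q1 x + t * G1 x $ j"
    "\<And>y. y \<in> cbx T1 \<Longrightarrow> Q1 y = bubble T y \<and> loc ?v T1 y = G1 y"
    using bubble_field_local_potential[OF T T1] by blast
  have F1: "cbx F \<subseteq> cbx T1" using cbx_face_subset nondeg_refine_T0 T1 F by blast
  have "frontier (box lo hi) \<inter> box lo hi = {}"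
    unfolding frontier_def using interior_open[OF open_box] by blast
  then have "y \<notin> obx T" if "y \<in> cbx F" for y
    using that F boxes_inD(3)[OF boxes_in_T0 T] by blast
  then have zero: "Q1 y = 0" if "y \<in> cbx F" for y
    using that F1 Q1(2) bubble_outside[OF boxes_inD(2)[OF boxes_in_T0 T]] by auto
  have "G1 x $ j = (0 :: pt \<Rightarrow> real^3) x $ j"
  proof (rule tangential_slope_unique[where g = "\<lambda>_. 0" and dg = 0 and F = F and i = i, OF Q1(1)])
    show "fst F $ l \<le> snd F $ l" for l using is_face_le[OF nondeg_refine_T0[OF T1]] F by blast
  qed (use F j x zero in auto)
  moreover have "x \<in> cbx T1" using F1 x by blast
  ultimately show "loc ?v T1 x $ j = 0" using Q1(2) by simp
qed

lemma bubble_field_ned: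
  assumes T: "T \<in> T0"
  shows "bubble_field (refine T0) T \<in> Nk st 1"
  unfolding Nk_eq mesh_one ned_eq
  using bubble_field_piecewise_ned[OF T] bubble_field_tangential_continuity[OF T]
    bubble_field_tangential_boundary_zero[OF T] by blast

lemma exact_if_stable_decomp_negative:
  assumes sd: "stable_decomp var st C" and C: "C < 0" and k: "1 \<le> k" and v: "v \<in> Nk st k"
  shows "v = Inj st k (Ritz st k v)"
proof -
  interpret F: pos_def_form "piecewise_ned (mesh T0 k)" "aform \<alpha> lo hi"
    by (rule pos_def_form_level)
  define d where "d = v - Inj st k (Ritz st k v)"
  have "v \<in> piecewise_ned (mesh T0 k)" "Inj st k (Ritz st k v) \<in> piecewise_ned (mesh T0 k)"
    using v Nk_subset Ritz_spec(1)[OF k v] Inj_piecewise_ned[OF k] by blast+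
  then have dP: "d \<in> piecewise_ned (mesh T0 k)"
    unfolding d_def by (rule subspace_diff[OF subspace_piecewise_ned])
  obtain w where w: "\<And>i. i \<in> local_index var k \<Longrightarrow> w i \<in> local_space var k i"
    and stable: "(\<Sum>i\<in>local_index var k. aform \<alpha> lo hi (w i) (w i)) \<le> C * aform \<alpha> lo hi d d"
    using stable_decomposition[OF sd k v] unfolding d_def by blast
  have "0 \<le> (\<Sum>i\<in>local_index var k. aform \<alpha> lo hi (w i) (w i))"
    using w local_space_subset Nk_subset by (intro sum_nonneg F.nonneg) blast
  then have "0 \<le> C * aform \<alpha> lo hi d d" using stable by linarith
  then have "aform \<alpha> lo hi d d = 0"
    using F.nonneg[OF dP] C by (auto simp: zero_le_mult_iff)
  then show ?thesis using F.definite[OF dP] unfolding d_def by simp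
qed

text \<open>At the centres of the two children on either side of the midplane in the first coordinate,
  the first component of the bubble field has opposite signs, whereas the first component of a
  coarse Nedelec polynomial does not depend on the first coordinate.\<close>

lemma bubble_field_not_coarse:
  assumes T: "T \<in> T0" and R: "R \<in> piecewise_ned T0"
  shows "bubble_field (refine T0) T \<noteq> Inj st 1 R"
proof
  assume exact: "bubble_field (refine T0) T = Inj st 1 R"
  have nd: "nondeg T" by (rule boxes_inD(2)[OF boxes_in_T0 T])
  obtain a b c where p: "\<forall>x\<in>obx T. R x = ned_poly a b c x"
    using R T unfolding piecewise_ned_def ned_polys_def by blast
  have on_child: "bubble_grad T s x = ned_poly a b c x" if x: "x \<in> obx (child T s)" for x s
  proof -
    have "child T s \<in> mesh T0 1" unfolding mesh_one mem_refine using T by blast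
    then have "bubble_field (refine T0) T x = R x" using exact x by (auto simp: Inj_eq)
    moreover have "x \<in> obx T" using x obx_child_subset by blast
    ultimately show ?thesis using bubble_field_on_child[OF T x] p by simp
  qed
  define s0 s1 :: "3 \<Rightarrow> bool" where "s0 = (\<lambda>_. False)" and "s1 = (\<lambda>i. i = 1)"
  have "ned_poly a b c (child_center T s0) $ 1 = ned_poly a b c (child_center T s1) $ 1"
    by (simp add: ned_poly_component child_center_def s0_def s1_def)
  moreover have "bubble_grad T s (child_center T s) $ 1 = ned_poly a b c (child_center T s) $ 1" for s
    using on_child[OF child_center_in_child[OF nd]] by simp
  ultimately have "hat_slope T s0 1 = hat_slope T s1 1"
    using bubble_grad_at_child_center[OF nd, of s0] bubble_grad_at_child_center[OF nd, of s1] by simp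
  then show False using box_half_pos[OF nd, of 1] by (simp add: hat_slope_def s0_def s1_def)
qed

lemma stable_decomp_nonneg:
  assumes sd: "stable_decomp var st C"
  shows "0 \<le> C"
proof (rule ccontr)
  assume "\<not> 0 \<le> C"
  obtain T where T: "T \<in> T0" using box_mesh unfolding box_mesh_def by blast
  define v where "v = bubble_field (refine T0) T"
  have v: "v \<in> Nk st 1" unfolding v_def by (rule bubble_field_ned[OF T])
  have "Ritz st 1 v \<in> piecewise_ned T0"
    using Ritz_spec(1)[of 1 v] v Nk_subset[of 0] by (auto simp: mesh_def)
  moreover have "v = Inj st 1 (Ritz st 1 v)"
    using exact_if_stable_decomp_negative[OF sd _ _ v] \<open>\<not> 0 \<le> C\<close> by simp
  ultimately show False using bubble_field_not_coarse[OF T] unfolding v_def by blast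
qed

end

theorem lemma4p9:
  fixes \<alpha> :: real and lo hi :: "real^3" and T0 :: "bx set"
    and var :: variant and \<eta> C :: real
  assumes "\<alpha> > 0"
    and "\<forall>i. lo $ i < hi $ i"
    and "box_mesh lo hi T0"
    and "0 < \<eta>" and "\<eta> \<le> eta_max var"
    and "stable_decomp var (\<alpha>, lo, hi, T0) C"
    and "k \<ge> 1"
    and "v \<in> Nk (\<alpha>, lo, hi, T0) k"
  shows "(let st = (\<alpha>, lo, hi, T0);
              d = (\<lambda>x. v x - Inj st k (Ritz st k v) x);
              IdR = (\<lambda>x. v x - Rk var \<eta> st k v x)
          in ak st d d \<le> (C / \<eta>) * ak st IdR v)"
proof -
  interpret nedelec_hierarchy \<alpha> lo hi T0
    using assms(1,3) by unfold_locales
  have "(\<lambda>x. v x - Inj st k (Ritz st k v) x) = v - Inj st k (Ritz st k v)"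
    "(\<lambda>x. v x - Rk var \<eta> st k v x) = v - Rk var \<eta> st k v"
    by auto
  then show ?thesis
    using two_level_bound[OF assms(7,8,4,6) stable_decomp_nonneg[OF assms(6)]]
    by (simp add: Let_def ak_eq)
qed

end
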